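(* Let $s(n)$ be defined by $\sum_{n\ge0}s(n)q^n=\frac{(q^2;q^2)_\infty}{(q;q)_\infty^2(q^4;q^4)_\infty^2}$. Let $U:=\{j(3j+2): j\in\mathbb Z\setminus\{0\}\}$. Then for every $n\ge0$, $$s(n)=\sum_{\substack{c\in\mathcal C_U\\ |c|=n}}\ \prod_{j\in\mathbb Z\setminus\{0\}}(-1-3j)^{m_{j(3j+2)}(c)}.$$
   Context: $(a;q)_\infty:=\prod_{i\ge0}(1-aq^i)$. A composition is an ordered finite sequence of positive integers (including the empty one); $|c|$ is the sum of parts; $m_i(c)$ is the number of parts equal to $i$; $\mathcal C_T$ is the set of compositions with all parts in $T$. *)

theory Defs
  imports "HOL-Analysis.Analysis"
begin

definition qpoch_inf :: "real \<Rightarrow> real \<Rightarrow> real" where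
  "qpoch_inf a q = prodinf (\<lambda>i. 1 - a * q ^ i)"

definition compositions :: "nat set \<Rightarrow> nat list set" where
  "compositions T = {c. \<forall>x \<in> set c. 0 < x \<and> x \<in> T}"

definition mult :: "nat \<Rightarrow> nat list \<Rightarrow> nat" where
  "mult i c = count_list c i"

text \<open>U = { j(3j+2) : j in Z, j /= 0 }  (all such values are positive).\<close>
definition U15 :: "nat set" where
  "U15 = {nat (j * (3 * j + 2)) | j :: int. j \<noteq> 0}"

end

theory Submission
  imports Defs
begin

text \<open>Since \<open>(q; q)_\<infinity> = (q; q^2)_\<infinity> (q^2; q^2)_\<infinity>\<close>, the generating function of \<open>s\<close> is \<open>1 / F\<close> with
  \<open>F = (q; q^2)_\<infinity>^2 (q^2; q^2)_\<infinity> (q^4; q^4)_\<infinity>^2\<close>. The heart of the matter is the identity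
  \<open>F = \<Sum>\<^sub>m\<^sub>\<in>\<^sub>\<int> (3m + 1) q^(m (3m + 2)) = 1 - \<Sum>\<^sub>j\<^sub>\<noteq>\<^sub>0 (-1 - 3j) q^(j (3j + 2))\<close>; expanding
  \<open>1 / F\<close> as a geometric series then gives the sum over compositions with parts in \<open>U\<close>.

  The identity comes from evaluating \<open>\<Sum>\<^sub>a\<^sub>,\<^sub>b (2b - a) (-1)^(a + b) q^(a^2 - 2a + 2b^2 + 2b)\<close> in
  two ways. It factors into Gauss's theta series for \<open>(q; q^2)_\<infinity>^2 (q^2; q^2)_\<infinity>\<close> and Jacobi's
  series for \<open>(q^4; q^4)_\<infinity>^3\<close>. On the other hand, splitting \<open>\<int>^2\<close> by the residue of \<open>2b - a\<close>
  mod 3, one class cancels under an involution and the other two together reparametrise to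
  \<open>\<Sum>\<^sub>m (3m + 1) q^(3m^2 + 2m)\<close> times Euler's pentagonal series for \<open>(q^4; q^4)_\<infinity>\<close>. All three
  product formulas are instances of Jacobi's triple product identity, obtained from its finite
  form (a consequence of the q-binomial theorem) by Tannery's theorem.\<close>

section \<open>Gaussian binomial coefficients\<close>

definition qpoch :: "real \<Rightarrow> real \<Rightarrow> nat \<Rightarrow> real" where
  "qpoch a q n = (\<Prod>i<n. 1 - a * q ^ i)"

lemma qpoch_0 [simp]: "qpoch a q 0 = 1"
  by (simp add: qpoch_def)

lemma qpoch_Suc: "qpoch a q (Suc n) = qpoch a q n * (1 - a * q ^ n)"
  by (simp add: qpoch_def)

text \<open>Lemmas named \<open>qfact_\<dots>\<close> concern \<open>qpoch p p n = (p; p)\<^sub>n\<close>.\<close>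

lemma qfact_Suc: "qpoch p p (Suc n) = qpoch p p n * (1 - p ^ Suc n)"
  by (simp add: qpoch_Suc)

fun qbinomial :: "real \<Rightarrow> nat \<Rightarrow> nat \<Rightarrow> real" where
  "qbinomial p 0 0 = 1"
| "qbinomial p 0 (Suc k) = 0"
| "qbinomial p (Suc M) 0 = 1"
| "qbinomial p (Suc M) (Suc k) = qbinomial p M k + p ^ Suc k * qbinomial p M (Suc k)"

lemma qbinomial_eq_0: "M < k \<Longrightarrow> qbinomial p M k = 0"
proof (induction M arbitrary: k)
  case 0 then show ?case by (cases k) auto
next
  case (Suc M) then show ?case by (cases k) auto
qed

lemma qbinomial_0_right [simp]: "qbinomial p M 0 = 1"
  by (cases M) auto

lemma qbinomial_same [simp]: "qbinomial p M M = 1"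
  by (induction M) (auto simp: qbinomial_eq_0)

lemma qbinomial_closed_form:
  "k \<le> M \<Longrightarrow> qpoch p p k * qpoch p p (M - k) * qbinomial p M k = qpoch p p M"
proof (induction M arbitrary: k)
  case 0 then show ?case by simp
next
  case (Suc M)
  show ?case
  proof (cases k)
    case 0 then show ?thesis by simp
  next
    case (Suc j)
    show ?thesis
    proof (cases "j = M")
      case True
      with Suc show ?thesis by (simp add: qbinomial_eq_0 qfact_Suc)
    next
      case False
      with Suc Suc.prems have jM: "j < M" by simp
      have IH1: "qpoch p p j * qpoch p p (M - j) * qbinomial p M j = qpoch p p M"
        using Suc.IH[of j] jM by simp
      have IH2: "qpoch p p (Suc j) * qpoch p p (M - Suc j) * qbinomial p M (Suc j) = qpoch p p M"
        using Suc.IH[of "Suc j"] jM by simp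
      have split: "qpoch p p (M - j) = qpoch p p (M - Suc j) * (1 - p ^ (M - j))"
        using jM by (metis Suc_diff_Suc qfact_Suc)
      have pow: "p ^ Suc j * p ^ (M - j) = p ^ Suc M"
        using jM by (simp flip: power_add)
      have "qpoch p p (Suc j) * qpoch p p (Suc M - Suc j) * qbinomial p (Suc M) (Suc j)
          = qpoch p p (Suc j) * qpoch p p (M - j) * qbinomial p M j
            + p ^ Suc j * (qpoch p p (Suc j) * qpoch p p (M - j) * qbinomial p M (Suc j))"
        by (simp add: algebra_simps)
      also have "qpoch p p (Suc j) * qpoch p p (M - j) * qbinomial p M j = (1 - p ^ Suc j) * qpoch p p M"
        using IH1 by (simp add: qfact_Suc algebra_simps)
      also have "qpoch p p (Suc j) * qpoch p p (M - j) * qbinomial p M (Suc j) = (1 - p ^ (M - j)) * qpoch p p M"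
        unfolding split using IH2 by (metis mult.assoc mult.commute)
      also have "(1 - p ^ Suc j) * qpoch p p M + p ^ Suc j * ((1 - p ^ (M - j)) * qpoch p p M)
          = qpoch p p M - (p ^ Suc j * p ^ (M - j)) * qpoch p p M"
        by (simp add: algebra_simps)
      also have "\<dots> = qpoch p p (Suc M)"
        unfolding pow by (simp add: qfact_Suc algebra_simps)
      finally show ?thesis using Suc by simp
    qed
  qed
qed

definition triangular :: "nat \<Rightarrow> nat" where
  "triangular n = n * (n - 1) div 2"

lemma double_triangular: "2 * triangular n = n * (n - 1)"
proof -
  have "even (n * (n - 1))" by (cases "even n") auto
  then show ?thesis unfolding triangular_def by simp
qed

lemma triangular_0 [simp]: "triangular 0 = 0"
  by (simp add: triangular_def)

lemma triangular_Suc: "triangular (Suc k) = triangular k + k"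
proof -
  have "Suc k * (Suc k - 1) = k * (k - 1) + 2 * k" by (cases k) (auto simp: algebra_simps)
  then show ?thesis unfolding triangular_def by simp
qed

lemma qbinomial_sum_Suc:
  "(\<Sum>k\<le>Suc M. qbinomial p (Suc M) k * p ^ triangular k * x ^ k)
   = (1 + x) * (\<Sum>k\<le>M. qbinomial p M k * p ^ triangular k * (p * x) ^ k)"
proof -
  define a where "a k = qbinomial p M k * p ^ triangular k * (p * x) ^ k" for k
  have "(\<Sum>k\<le>Suc M. qbinomial p (Suc M) k * p ^ triangular k * x ^ k)
      = 1 + (\<Sum>k\<le>M. qbinomial p (Suc M) (Suc k) * p ^ triangular (Suc k) * x ^ Suc k)"
    by (subst sum.atMost_Suc_shift) (simp add: triangular_def)
  also have "\<dots> = 1 + (\<Sum>k\<le>M. x * a k + a (Suc k))"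
    by (intro arg_cong2[where f = "(+)"] sum.cong refl)
       (simp add: a_def triangular_Suc power_add power_mult_distrib algebra_simps)
  also have "\<dots> = (1 + x) * (\<Sum>k\<le>M. a k)"
  proof -
    have "(\<Sum>k\<le>M. a k) = (\<Sum>k\<le>Suc M. a k)"
      by (simp add: a_def qbinomial_eq_0)
    also have "\<dots> = 1 + (\<Sum>k\<le>M. a (Suc k))"
      by (subst sum.atMost_Suc_shift) (simp add: a_def triangular_def)
    moreover have "(\<Sum>k\<le>M. x * a k + a (Suc k)) = x * (\<Sum>k\<le>M. a k) + (\<Sum>k\<le>M. a (Suc k))"
      by (simp add: sum.distrib sum_distrib_left)
    ultimately show ?thesis by (simp add: algebra_simps)
  qed
  finally show ?thesis by (simp add: a_def)
qed

theorem q_binomial_theorem: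
  "(\<Prod>i<M. 1 + x * p ^ i) = (\<Sum>k\<le>M. qbinomial p M k * p ^ triangular k * x ^ k)"
proof (induction M arbitrary: x)
  case 0 then show ?case by simp
next
  case (Suc M)
  have "(\<Prod>i<Suc M. 1 + x * p ^ i) = (1 + x) * (\<Prod>i<M. 1 + (p * x) * p ^ i)"
    by (subst prod.lessThan_Suc_shift) (simp add: mult_ac)
  then show ?case by (simp only: Suc.IH qbinomial_sum_Suc)
qed

declare qbinomial.simps [simp del]

lemma qfact_pos:
  assumes "0 \<le> p" "p < 1"
  shows "qpoch p p n > 0"
  unfolding qpoch_def
proof (intro prod_pos)
  fix i
  have "p * p ^ i < 1" using power_Suc_less_one[of p i] assms by (cases "p = 0") auto
  then show "0 < 1 - p * p ^ i" by simp
qed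

lemma qbinomial_symmetric:
  assumes "0 \<le> p" "p < 1" "k \<le> M"
  shows "qbinomial p M (M - k) = qbinomial p M k"
proof -
  have "qpoch p p k * qpoch p p (M - k) * qbinomial p M k = qpoch p p M"
    using qbinomial_closed_form assms by simp
  moreover have "qpoch p p (M - k) * qpoch p p (M - (M - k)) * qbinomial p M (M - k) = qpoch p p M"
    using qbinomial_closed_form[of "M - k" M p] by simp
  ultimately have "qpoch p p k * qpoch p p (M - k) * qbinomial p M k
      = qpoch p p k * qpoch p p (M - k) * qbinomial p M (M - k)"
    using assms by (simp add: mult_ac)
  moreover have "qpoch p p k * qpoch p p (M - k) \<noteq> 0"
    using qfact_pos assms by (metis mult_pos_pos less_irrefl)
  ultimately show ?thesis by simp
qed

section \<open>The finite Jacobi triple product\<close>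

lemma triangular_shift_up:
  "triangular (N + 1 + j) + triangular (N + 1) = triangular (j + 1) + N * (N + 1 + j)"
proof -
  have "2 * (triangular (N + 1 + j) + triangular (N + 1)) = 2 * (triangular (j + 1) + N * (N + 1 + j))"
    unfolding add_mult_distrib2 double_triangular by (simp add: algebra_simps)
  then show ?thesis by simp
qed

lemma triangular_shift_down:
  assumes "j \<le> N"
  shows "triangular (N - j) + triangular (N + 1) = triangular (j + 1) + N * (N - j)"
proof -
  obtain d where d: "N = j + d" using assms le_Suc_ex by blast
  have "2 * (triangular d + triangular (j + d + 1)) = 2 * (triangular (j + 1) + (j + d) * d)"
    unfolding add_mult_distrib2 double_triangular by (cases d) (simp_all add: algebra_simps)
  then show ?thesis using d by simp
qed

lemma prod_lessThan_add: fixes a b :: nat shows "(\<Prod>i<a + b. f i) = (\<Prod>i<a. f i) * (\<Prod>i<b. f (a + i))"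
  by (induction b) (auto simp: mult_ac)

lemma sum_lessThan_add: fixes a b :: nat shows "(\<Sum>i<a + b. f i) = (\<Sum>i<a. f i) + (\<Sum>i<b. f (a + i))"
  by (induction b) (auto simp: add_ac)

lemma sum_lessThan_Suc_id: "(\<Sum>i<N. Suc i) = triangular (N + 1)"
  by (induction N) (simp_all add: triangular_Suc)

text \<open>Substituting \<open>x / p ^ N\<close> in the q-binomial theorem for \<open>M = 2 N + 1\<close> and splitting the
  product at \<open>i = N\<close> gives, up to the factor \<open>x ^ N / p ^ triangular (N + 1)\<close>, both sides of the
  finite triple product.\<close>

lemma finite_triple_product_lhs:
  fixes p x :: real
  assumes p0: "0 < p" and x0: "x \<noteq> 0"
  shows "(\<Prod>i<2 * N + 1. 1 + x / p ^ N * p ^ i)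
       = x ^ N / p ^ triangular (N + 1) * ((\<Prod>i\<le>N. 1 + x * p ^ i) * (\<Prod>i<N. 1 + p ^ (i + 1) / x))"
proof -
  have pN: "p ^ N \<noteq> 0" using p0 by simp
  have "(\<Prod>i<2 * N + 1. 1 + x / p ^ N * p ^ i)
      = (\<Prod>i<N. 1 + x / p ^ N * p ^ i) * (\<Prod>i<N + 1. 1 + x / p ^ N * p ^ (N + i))"
    using prod_lessThan_add[of "\<lambda>i. 1 + x / p ^ N * p ^ i" N "N + 1"] by (simp add: mult_2)
  also have "(\<Prod>i<N + 1. 1 + x / p ^ N * p ^ (N + i)) = (\<Prod>i\<le>N. 1 + x * p ^ i)"
  proof -
    have "x / p ^ N * p ^ (N + i) = x * p ^ i" for i
      using p0 by (simp add: power_add field_simps)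
    then show ?thesis by (simp add: lessThan_Suc_atMost[symmetric])
  qed
  also have "(\<Prod>i<N. 1 + x / p ^ N * p ^ i) = (\<Prod>i<N. 1 + x / p ^ N * p ^ (N - Suc i))"
    by (rule prod.nat_diff_reindex[symmetric])
  also have "\<dots> = (\<Prod>i<N. (x / p ^ (i + 1)) * (1 + p ^ (i + 1) / x))"
  proof (rule prod.cong[OF refl])
    fix i assume "i \<in> {..<N}"
    then have "p ^ (N - Suc i) * p ^ (i + 1) = p ^ N" by (subst power_add[symmetric]) simp
    then show "1 + x / p ^ N * p ^ (N - Suc i) = (x / p ^ (i + 1)) * (1 + p ^ (i + 1) / x)"
      using pN p0 x0 by (simp add: field_simps)
  qed
  also have "\<dots> = x ^ N / p ^ triangular (N + 1) * (\<Prod>i<N. 1 + p ^ (i + 1) / x)"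
  proof -
    have "(\<Prod>i<N. p ^ (i + 1)) = p ^ triangular (N + 1)"
      using power_sum[of p "\<lambda>i. i + 1" "{..<N}"] sum_lessThan_Suc_id[of N] by simp
    then have "(\<Prod>i<N. x / p ^ (i + 1)) = x ^ N / p ^ triangular (N + 1)"
      by (simp add: prod_dividef)
    then show ?thesis by (simp only: prod.distrib)
  qed
  finally show ?thesis by (simp add: mult_ac)
qed

lemma finite_triple_product_rhs:
  fixes p x :: real
  assumes p0: "0 < p" and p1: "p < 1" and x0: "x \<noteq> 0"
  shows "(\<Sum>k\<le>2 * N + 1. qbinomial p (2 * N + 1) k * p ^ triangular k * (x / p ^ N) ^ k)
       = x ^ N / p ^ triangular (N + 1)
         * (\<Sum>j\<le>N. qbinomial p (2 * N + 1) (N + 1 + j) * p ^ triangular (j + 1) * (x ^ (j + 1) + 1 / x ^ j))"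
    (is "_ = ?c * _")
proof -
  define f where "f k = qbinomial p (2 * N + 1) k * p ^ triangular k * (x / p ^ N) ^ k" for k
  have "(\<Sum>k\<le>2 * N + 1. f k) = (\<Sum>k<(N + 1) + (N + 1). f k)"
    by (simp add: lessThan_Suc_atMost[symmetric] mult_2)
  also have "\<dots> = (\<Sum>j<N + 1. f (N - j)) + (\<Sum>j<N + 1. f (N + 1 + j))"
    using sum_lessThan_add[of f "N + 1" "N + 1"] sum.nat_diff_reindex[of f "N + 1"] by simp
  also have "\<dots> = (\<Sum>j\<le>N. f (N - j) + f (N + 1 + j))"
    by (simp add: sum.distrib lessThan_Suc_atMost[symmetric])
  also have "\<dots> = (\<Sum>j\<le>N. ?c * (qbinomial p (2 * N + 1) (N + 1 + j) * p ^ triangular (j + 1) * (x ^ (j + 1) + 1 / x ^ j)))"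
  proof (rule sum.cong[OF refl])
    fix j assume "j \<in> {..N}"
    then have jN: "j \<le> N" by simp
    have sym: "qbinomial p (2 * N + 1) (N - j) = qbinomial p (2 * N + 1) (N + 1 + j)"
      using qbinomial_symmetric[of p "N - j" "2 * N + 1"] p0 p1 jN by (simp add: Suc_diff_le)
    have up: "p ^ triangular (N + 1 + j) = p ^ triangular (j + 1) * p ^ (N * (N + 1 + j)) / p ^ triangular (N + 1)"
      using triangular_shift_up[of N j] p0 by (simp add: field_simps flip: power_add)
    have down: "p ^ triangular (N - j) = p ^ triangular (j + 1) * p ^ (N * (N - j)) / p ^ triangular (N + 1)"
      using triangular_shift_down[OF jN] p0 by (simp add: field_simps flip: power_add)
    have "f (N + 1 + j) = ?c * (qbinomial p (2 * N + 1) (N + 1 + j) * p ^ triangular (j + 1) * x ^ (j + 1))"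
    proof -
      have pow: "(x / p ^ N) ^ (N + 1 + j) = x ^ N * x ^ (j + 1) / p ^ (N * (N + 1 + j))"
        unfolding power_divide power_mult power_add[symmetric] by (simp add: ac_simps)
      show ?thesis unfolding f_def up pow using p0 by (simp add: field_simps)
    qed
    moreover have "f (N - j) = ?c * (qbinomial p (2 * N + 1) (N + 1 + j) * p ^ triangular (j + 1) * (1 / x ^ j))"
    proof -
      have pow: "(x / p ^ N) ^ (N - j) = x ^ N / x ^ j / p ^ (N * (N - j))"
        using jN x0 by (simp add: power_divide power_mult power_diff)
      show ?thesis unfolding f_def down sym pow using x0 p0 by (simp add: field_simps)
    qed
    ultimately show "f (N - j) + f (N + 1 + j)
        = ?c * (qbinomial p (2 * N + 1) (N + 1 + j) * p ^ triangular (j + 1) * (x ^ (j + 1) + 1 / x ^ j))"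
      by (simp add: algebra_simps)
  qed
  finally show ?thesis by (simp add: f_def sum_distrib_left)
qed

theorem finite_triple_product:
  fixes p x :: real
  assumes "0 < p" "p < 1" "x \<noteq> 0"
  shows "(\<Prod>i\<le>N. 1 + x * p ^ i) * (\<Prod>i<N. 1 + p ^ (i + 1) / x)
       = (\<Sum>j\<le>N. qbinomial p (2 * N + 1) (N + 1 + j) * p ^ triangular (j + 1) * (x ^ (j + 1) + 1 / x ^ j))"
  using q_binomial_theorem[where M = "2 * N + 1" and x = "x / p ^ N" and p = p]
    finite_triple_product_lhs[of p x N] finite_triple_product_rhs[of p x N] assms
  by simp

lemma finite_triple_product_divided:
  fixes p x :: real
  assumes p0: "0 < p" and p1: "p < 1" and x0: "x \<noteq> 0" and x1: "x \<noteq> -1"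
  shows "(\<Prod>i<N. 1 + x * p ^ (i + 1)) * (\<Prod>i<N. 1 + p ^ (i + 1) / x)
       = (\<Sum>j\<le>N. qbinomial p (2 * N + 1) (N + 1 + j) * p ^ triangular (j + 1)
                 * ((\<Sum>i<2 * j + 1. (- x) ^ i) / x ^ j))"
proof -
  have geom: "(1 + x) * ((\<Sum>i<2 * j + 1. (- x) ^ i) / x ^ j) = x ^ (j + 1) + 1 / x ^ j" for j
  proof -
    have odd_power: "(- x) ^ (2 * j + 1) = - (x ^ (2 * j + 1))" by (rule power_minus_odd) simp
    have "(1 + x) * (\<Sum>i<2 * j + 1. (- x) ^ i) = 1 + x ^ (2 * j + 1)"
      using one_diff_power_eq[of "- x" "2 * j + 1"] unfolding odd_power by simp
    moreover have "x ^ (2 * j + 1) = x ^ (j + 1) * x ^ j" by (simp add: mult_2 flip: power_add)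
    ultimately show ?thesis using x0 by (simp add: field_simps)
  qed
  have "(1 + x) * ((\<Prod>i<N. 1 + x * p ^ (i + 1)) * (\<Prod>i<N. 1 + p ^ (i + 1) / x))
      = (\<Prod>i\<le>N. 1 + x * p ^ i) * (\<Prod>i<N. 1 + p ^ (i + 1) / x)"
    unfolding lessThan_Suc_atMost[symmetric] prod.lessThan_Suc_shift by simp
  also have "\<dots> = (1 + x) * (\<Sum>j\<le>N. qbinomial p (2 * N + 1) (N + 1 + j) * p ^ triangular (j + 1)
                 * ((\<Sum>i<2 * j + 1. (- x) ^ i) / x ^ j))"
    unfolding finite_triple_product[OF p0 p1 x0] sum_distrib_left
    by (intro sum.cong refl) (simp only: geom[symmetric] ac_simps)
  finally show ?thesis using x1 by simp
qed

text \<open>At \<open>x = -1\<close> the finite triple product degenerates to \<open>0 = 0\<close>; dividing by \<open>1 + x\<close> first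
  and letting \<open>x \<rightarrow> -1\<close> yields the finite form of Jacobi's identity for \<open>(p; p)\<^sub>\<infinity>\<^sup>3\<close>.\<close>

theorem finite_jacobi_identity:
  fixes p :: real
  assumes p0: "0 < p" and p1: "p < 1"
  shows "qpoch p p N ^ 2
       = (\<Sum>j\<le>N. qbinomial p (2 * N + 1) (N + 1 + j) * p ^ triangular (j + 1) * ((-1) ^ j * (2 * real j + 1)))"
proof -
  define R where "R x = (\<Prod>i<N. 1 + x * p ^ (i + 1)) * (\<Prod>i<N. 1 + p ^ (i + 1) / x)" for x :: real
  define S where "S x = (\<Sum>j\<le>N. qbinomial p (2 * N + 1) (N + 1 + j) * p ^ triangular (j + 1)
                 * ((\<Sum>i<2 * j + 1. (- x) ^ i) / x ^ j))" for x :: real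
  have "\<forall>\<^sub>F x in at (-1::real). x \<in> - {0} - {-1}"
    by (rule eventually_at_in_open) auto
  then have "\<forall>\<^sub>F x in at (-1::real). R x = S x"
  proof (rule eventually_mono)
    fix x :: real assume "x \<in> - {0} - {-1}"
    then show "R x = S x"
      unfolding R_def S_def by (intro finite_triple_product_divided[OF p0 p1]) auto
  qed
  moreover have "(R \<longlongrightarrow> R (-1)) (at (-1))"
    unfolding R_def by (intro tendsto_intros) auto
  ultimately have "(S \<longlongrightarrow> R (-1)) (at (-1))"
    by (rule Lim_transform_eventually[rotated])
  moreover have "(S \<longlongrightarrow> S (-1)) (at (-1))"
    unfolding S_def by (intro tendsto_intros) auto
  ultimately have "R (-1) = S (-1)"
    using tendsto_unique by (metis trivial_limit_at)
  moreover have "R (-1) = qpoch p p N ^ 2"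
    unfolding R_def qpoch_def by (simp add: power2_eq_square)
  moreover have "S (-1) = (\<Sum>j\<le>N. qbinomial p (2 * N + 1) (N + 1 + j) * p ^ triangular (j + 1)
                 * ((-1) ^ j * (2 * real j + 1)))"
  proof -
    have "(\<Sum>i<2 * j + 1. (- (-1::real)) ^ i) / (-1) ^ j = (-1) ^ j * (2 * real j + 1)" for j
      by (cases "even j") (auto simp: field_simps)
    then show ?thesis unfolding S_def by (intro sum.cong refl) (simp only:)
  qed
  ultimately show ?thesis by simp
qed

section \<open>Infinite products and Tannery's theorem\<close>

lemma convergent_prod_geometric:
  fixes a b :: real
  assumes "\<bar>b\<bar> < 1"
  shows "convergent_prod (\<lambda>i. 1 + a * b ^ i)"
proof -
  have "summable (\<lambda>i. \<bar>a\<bar> * \<bar>b\<bar> ^ i)" using assms by (intro summable_mult summable_geometric) simp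
  then have "summable (\<lambda>i. norm ((1 + a * b ^ i) - 1))" by (simp add: abs_mult power_abs)
  then show ?thesis by (intro abs_convergent_prod_imp_convergent_prod summable_imp_abs_convergent_prod)
qed

lemma convergent_prod_qpoch: "\<bar>q\<bar> < 1 \<Longrightarrow> convergent_prod (\<lambda>i. 1 - a * q ^ i)" for a q :: real
  using convergent_prod_geometric[of q "- a"] by simp

lemma prod_lessThan_LIMSEQ: "convergent_prod f \<Longrightarrow> (\<lambda>n. \<Prod>i<n. f i) \<longlonglongrightarrow> prodinf f"
  for f :: "nat \<Rightarrow> real"
  using convergent_prod_LIMSEQ LIMSEQ_lessThan_iff_atMost by blast

lemma qpoch_LIMSEQ: "\<bar>q\<bar> < 1 \<Longrightarrow> (\<lambda>n. qpoch a q n) \<longlonglongrightarrow> qpoch_inf a q" for a q :: real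
  unfolding qpoch_def qpoch_inf_def by (rule prod_lessThan_LIMSEQ[OF convergent_prod_qpoch])

lemma qpoch_inf_nonzero: "\<bar>a\<bar> < 1 \<Longrightarrow> \<bar>q\<bar> < 1 \<Longrightarrow> qpoch_inf a q \<noteq> 0" for a q :: real
  unfolding qpoch_inf_def
proof (rule prodinf_nonzero[OF convergent_prod_qpoch])
  fix i assume "\<bar>a\<bar> < 1" "\<bar>q\<bar> < 1"
  moreover have "\<bar>q\<bar> ^ i \<le> 1" using \<open>\<bar>q\<bar> < 1\<close> by (intro power_le_one) auto
  ultimately have "\<bar>a\<bar> * \<bar>q\<bar> ^ i \<le> \<bar>a\<bar>" by (intro mult_left_le) auto
  then have "\<bar>a * q ^ i\<bar> < 1" using \<open>\<bar>a\<bar> < 1\<close> by (simp add: abs_mult power_abs)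
  then show "1 - a * q ^ i \<noteq> 0" by auto
qed

lemma qpoch_inf_split:
  fixes q :: real
  assumes q: "\<bar>q\<bar> < 1" and k: "k > 0"
  shows "qpoch_inf q q = (\<Prod>r<k. qpoch_inf (q ^ (r + 1)) (q ^ k))"
proof -
  have qk: "\<bar>q ^ k\<bar> < 1" using q k by (simp add: power_abs power_less_one_iff)
  have "qpoch q q (N * k) = (\<Prod>r<k. qpoch (q ^ (r + 1)) (q ^ k) N)" for N
  proof -
    have "qpoch q q (N * k) = (\<Prod>n<N. \<Prod>i\<in>{n * k..<n * k + k}. 1 - q * q ^ i)"
      unfolding qpoch_def by (rule prod.nat_group[symmetric])
    also have "\<dots> = (\<Prod>n<N. \<Prod>r<k. 1 - q ^ (r + 1) * (q ^ k) ^ n)"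
    proof (rule prod.cong[OF refl])
      fix n
      have "(\<Prod>i\<in>{n * k..<n * k + k}. 1 - q * q ^ i) = (\<Prod>r<k. 1 - q * q ^ (n * k + r))"
        by (rule prod.reindex_bij_witness[where i="\<lambda>r. n * k + r" and j="\<lambda>i. i - n * k"]) auto
      then show "(\<Prod>i\<in>{n * k..<n * k + k}. 1 - q * q ^ i) = (\<Prod>r<k. 1 - q ^ (r + 1) * (q ^ k) ^ n)"
        by (simp add: power_add power_mult mult_ac)
    qed
    also have "\<dots> = (\<Prod>r<k. qpoch (q ^ (r + 1)) (q ^ k) N)"
      unfolding qpoch_def by (rule prod.swap)
    finally show ?thesis .
  qed
  moreover have "(\<lambda>N. qpoch q q (N * k)) \<longlonglongrightarrow> qpoch_inf q q"
  proof -
    have "filterlim (\<lambda>N. N * k) at_top at_top" using k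
      by (intro filterlim_subseq strict_monoI) simp
    then show ?thesis by (rule filterlim_compose[OF qpoch_LIMSEQ[OF q]])
  qed
  moreover have "(\<lambda>N. \<Prod>r<k. qpoch (q ^ (r + 1)) (q ^ k) N) \<longlonglongrightarrow> (\<Prod>r<k. qpoch_inf (q ^ (r + 1)) (q ^ k))"
    by (intro tendsto_prod qpoch_LIMSEQ[OF qk])
  ultimately show ?thesis by (simp add: LIMSEQ_unique)
qed

context
  fixes p :: real
  assumes p0: "0 < p" and p1: "p < 1"
begin

lemma qfact_LIMSEQ: "(\<lambda>n. qpoch p p n) \<longlonglongrightarrow> qpoch_inf p p"
  using qpoch_LIMSEQ[of p p] p0 p1 by simp

lemma qpoch_inf_pos: "qpoch_inf p p > 0"
  unfolding qpoch_inf_def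
proof (rule less_0_prodinf[OF convergent_prod_qpoch])
  fix i show "0 < 1 - p * p ^ i" using power_Suc_less_one[of p i] p0 p1 by simp
qed (use p0 p1 in simp)

lemma qpoch_inf_le_qfact: "qpoch_inf p p \<le> qpoch p p n"
  unfolding qpoch_inf_def qpoch_def
proof (rule prod_ge_prodinf)
  show "(\<lambda>i. 1 - p * p ^ i) has_prod prodinf (\<lambda>i. 1 - p * p ^ i)"
    using convergent_prod_qpoch[of p p] p0 p1 convergent_prod_has_prod by simp
  fix i show "0 \<le> 1 - p * p ^ i" using power_Suc_less_one[of p i] p0 p1 by simp
  show "1 - p * p ^ i \<le> 1" using p0 by simp
qed

lemma qfact_antimono: "m \<le> n \<Longrightarrow> qpoch p p n \<le> qpoch p p m"
proof (induction n rule: dec_induct)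
  case (step n)
  have "qpoch p p (Suc n) \<le> qpoch p p n"
    using qfact_pos[of p n] p0 p1 by (simp add: qfact_Suc mult_left_le)
  then show ?case using step.IH by simp
qed simp

lemma qbinomial_nonneg: "0 \<le> qbinomial p M k"
proof (cases "k \<le> M")
  case True
  have "qpoch p p k * qpoch p p (M - k) * qbinomial p M k = qpoch p p M"
    using qbinomial_closed_form[OF True] .
  moreover have "qpoch p p k * qpoch p p (M - k) > 0" "qpoch p p M > 0"
    using qfact_pos p0 p1 by simp_all
  ultimately show ?thesis by (metis less_le zero_less_mult_pos)
qed (simp add: qbinomial_eq_0)

lemma qbinomial_le: "qbinomial p M k \<le> 1 / qpoch_inf p p"
proof (cases "k \<le> M")
  case True
  have pos: "qpoch p p k > 0" "qpoch p p (M - k) > 0" using qfact_pos p0 p1 by simp_all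
  have "qbinomial p M k = qpoch p p M / (qpoch p p k * qpoch p p (M - k))"
    using qbinomial_closed_form[OF True] pos by (simp add: field_simps)
  also have "\<dots> \<le> qpoch p p k / (qpoch p p k * qpoch p p (M - k))"
    using pos qfact_antimono[OF True] by (intro divide_right_mono) simp_all
  also have "\<dots> = 1 / qpoch p p (M - k)" using pos by simp
  also have "\<dots> \<le> 1 / qpoch_inf p p"
    using qpoch_inf_le_qfact qpoch_inf_pos pos by (intro divide_left_mono) simp_all
  finally show ?thesis .
next
  case False then show ?thesis using qpoch_inf_pos by (simp add: qbinomial_eq_0)
qed

lemma qbinomial_central_LIMSEQ: "(\<lambda>N. qbinomial p (2 * N + 1) (N + 1 + j)) \<longlonglongrightarrow> 1 / qpoch_inf p p"
proof -
  have "\<forall>\<^sub>F N in sequentially.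
      qpoch p p (2 * N + 1) / (qpoch p p (N + 1 + j) * qpoch p p (N - j)) = qbinomial p (2 * N + 1) (N + 1 + j)"
  proof (rule eventually_sequentiallyI[of j])
    fix N assume "j \<le> N"
    then have "qpoch p p (N + 1 + j) * qpoch p p (N - j) * qbinomial p (2 * N + 1) (N + 1 + j) = qpoch p p (2 * N + 1)"
      using qbinomial_closed_form[of "N + 1 + j" "2 * N + 1" p] by simp
    moreover have "qpoch p p (N + 1 + j) * qpoch p p (N - j) > 0" using qfact_pos p0 p1 by simp
    ultimately show "qpoch p p (2 * N + 1) / (qpoch p p (N + 1 + j) * qpoch p p (N - j))
        = qbinomial p (2 * N + 1) (N + 1 + j)"
      by (metis less_irrefl nonzero_mult_div_cancel_left)
  qed
  moreover have "(\<lambda>N. qpoch p p (2 * N + 1) / (qpoch p p (N + 1 + j) * qpoch p p (N - j)))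
      \<longlonglongrightarrow> qpoch_inf p p / (qpoch_inf p p * qpoch_inf p p)"
  proof -
    have "filterlim (\<lambda>N. 2 * N + 1) at_top sequentially" "filterlim (\<lambda>N. N + 1 + j) at_top sequentially"
      by (intro filterlim_subseq strict_monoI; simp)+
    then show ?thesis using qpoch_inf_pos
      by (intro tendsto_intros filterlim_compose[OF qfact_LIMSEQ] filterlim_minus_const_nat_at_top) simp_all
  qed
  ultimately have "(\<lambda>N. qbinomial p (2 * N + 1) (N + 1 + j)) \<longlonglongrightarrow> qpoch_inf p p / (qpoch_inf p p * qpoch_inf p p)"
    by (rule Lim_transform_eventually[rotated])
  then show ?thesis using qpoch_inf_pos by simp
qed

text \<open>The ratio of consecutive terms tends to \<open>0\<close>.\<close>

lemma summable_triangular_powers: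
  assumes c: "0 \<le> c"
  shows "summable (\<lambda>j. (real j + 1) * p ^ triangular (j + 1) * c ^ j)"
proof -
  have "(\<lambda>n. p ^ n * c) \<longlonglongrightarrow> 0 * c" using p0 p1 by (intro tendsto_intros LIMSEQ_power_zero) simp
  then have "\<forall>\<^sub>F n in sequentially. p ^ n * c < 1/4" by (rule order_tendstoD(2)) simp
  then obtain N0 where N0: "\<And>n. n \<ge> N0 \<Longrightarrow> p ^ n * c < 1/4" by (auto simp: eventually_sequentially)
  show ?thesis
  proof (rule summable_ratio_test[of "1/2" N0])
    fix n assume n: "n \<ge> N0"
    have "norm ((real (Suc n) + 1) * p ^ triangular (Suc n + 1) * c ^ Suc n)
        = (real n + 2) * (p ^ triangular (n + 1) * c ^ n) * (p ^ (n + 1) * c)"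
      using p0 c by (simp add: triangular_Suc[of "Suc n"] power_add abs_mult algebra_simps)
    also have "\<dots> \<le> (real n + 2) * (p ^ triangular (n + 1) * c ^ n) * (1/4)"
      using N0[of "n + 1"] n p0 c by (intro mult_left_mono) simp_all
    also have "\<dots> \<le> 1/2 * norm ((real n + 1) * p ^ triangular (n + 1) * c ^ n)"
      using p0 c by (simp add: abs_mult algebra_simps)
    finally show "norm ((real (Suc n) + 1) * p ^ triangular (Suc n + 1) * c ^ Suc n)
        \<le> 1/2 * norm ((real n + 1) * p ^ triangular (n + 1) * c ^ n)" .
  qed simp
qed

text \<open>Passing to the limit in a finite identity weighted by central Gaussian binomials: they are
  uniformly bounded and tend to \<open>1 / (p; p)\<^sub>\<infinity>\<close>, so Tannery's theorem applies.\<close>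

lemma sums_of_qbinomial_weighted_limit:
  assumes u: "summable (\<lambda>j. \<bar>u j\<bar>)"
    and L: "(\<lambda>N. \<Sum>j\<le>N. qbinomial p (2 * N + 1) (N + 1 + j) * u j) \<longlonglongrightarrow> L"
  shows "u sums (qpoch_inf p p * L)"
proof -
  define a where "a j N = (if j \<le> N then qbinomial p (2 * N + 1) (N + 1 + j) * u j else 0)" for j N
  have lim: "(\<lambda>N. a j N) \<longlonglongrightarrow> u j / qpoch_inf p p" for j
  proof -
    have "(\<lambda>N. qbinomial p (2 * N + 1) (N + 1 + j) * u j) \<longlonglongrightarrow> 1 / qpoch_inf p p * u j"
      by (intro tendsto_intros qbinomial_central_LIMSEQ)
    moreover have "\<forall>\<^sub>F N in sequentially. qbinomial p (2 * N + 1) (N + 1 + j) * u j = a j N"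
      by (rule eventually_sequentiallyI[of j]) (simp add: a_def)
    ultimately show ?thesis
      using Lim_transform_eventually by fastforce
  qed
  have bound: "eventually (\<lambda>(j, N). norm (a j N) \<le> \<bar>u j\<bar> / qpoch_inf p p) (at_top \<times>\<^sub>F sequentially)"
  proof (rule always_eventually, clarify)
    fix j N
    have "norm (a j N) \<le> (1 / qpoch_inf p p) * \<bar>u j\<bar>"
      unfolding a_def using mult_right_mono[OF qbinomial_le abs_ge_zero] qbinomial_nonneg qpoch_inf_pos
      by (auto simp: abs_mult)
    then show "norm (a j N) \<le> \<bar>u j\<bar> / qpoch_inf p p" by simp
  qed
  have "(\<lambda>N. suminf (\<lambda>j. a j N)) \<longlonglongrightarrow> suminf (\<lambda>j. u j / qpoch_inf p p)"
    using tannerys_theorem[OF lim bound summable_divide[OF u]] by simp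
  moreover have "suminf (\<lambda>j. a j N) = (\<Sum>j\<le>N. qbinomial p (2 * N + 1) (N + 1 + j) * u j)" for N
    by (subst suminf_finite[of "{..N}"]) (auto simp: a_def)
  ultimately have "suminf (\<lambda>j. u j / qpoch_inf p p) = L"
    using L by (simp add: LIMSEQ_unique)
  moreover have su: "summable u" using u summable_rabs_cancel by blast
  ultimately have "suminf u = qpoch_inf p p * L"
    using qpoch_inf_pos by (simp add: suminf_divide field_simps)
  then show ?thesis using summable_sums[OF su] by simp
qed

end

section \<open>Jacobi's triple product and cube identities\<close>

theorem jacobi_triple_product:
  fixes p x :: real
  assumes p0: "0 < p" and p1: "p < 1" and x0: "x \<noteq> 0"
  shows "(\<lambda>j. p ^ triangular (j + 1) * (x ^ (j + 1) + 1 / x ^ j)) sums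
           (qpoch_inf p p * (prodinf (\<lambda>i. 1 + x * p ^ i) * prodinf (\<lambda>i. 1 + p ^ (i + 1) / x)))"
proof (rule sums_of_qbinomial_weighted_limit[OF p0 p1])
  have "summable (\<lambda>j. \<bar>x\<bar> * ((real j + 1) * p ^ triangular (j + 1) * \<bar>x\<bar> ^ j)
                    + (real j + 1) * p ^ triangular (j + 1) * (1 / \<bar>x\<bar>) ^ j)"
    using summable_triangular_powers[OF p0 p1, of "\<bar>x\<bar>"] summable_triangular_powers[OF p0 p1, of "1 / \<bar>x\<bar>"]
    by (intro summable_add summable_mult) simp_all
  then show "summable (\<lambda>j. \<bar>p ^ triangular (j + 1) * (x ^ (j + 1) + 1 / x ^ j)\<bar>)"
  proof (rule summable_comparison_test'[where N = 0])
    fix j :: nat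
    have "\<bar>x ^ (j + 1) + 1 / x ^ j\<bar> \<le> \<bar>x\<bar> ^ (j + 1) + (1 / \<bar>x\<bar>) ^ j"
      using abs_triangle_ineq[of "x ^ (j + 1)" "1 / x ^ j"]
        by (simp add: power_abs power_one_over abs_mult)
    then have "\<bar>p ^ triangular (j + 1) * (x ^ (j + 1) + 1 / x ^ j)\<bar>
        \<le> 1 * (p ^ triangular (j + 1) * (\<bar>x\<bar> ^ (j + 1) + (1 / \<bar>x\<bar>) ^ j))"
      using p0 by (simp add: abs_mult mult_left_mono)
    also have "\<dots> \<le> (real j + 1) * (p ^ triangular (j + 1) * (\<bar>x\<bar> ^ (j + 1) + (1 / \<bar>x\<bar>) ^ j))"
      using p0 by (intro mult_right_mono) simp_all
    finally show "norm \<bar>p ^ triangular (j + 1) * (x ^ (j + 1) + 1 / x ^ j)\<bar>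
        \<le> \<bar>x\<bar> * ((real j + 1) * p ^ triangular (j + 1) * \<bar>x\<bar> ^ j)
          + (real j + 1) * p ^ triangular (j + 1) * (1 / \<bar>x\<bar>) ^ j"
      by (simp add: algebra_simps)
  qed
  have "(\<lambda>N. \<Prod>i\<le>N. 1 + x * p ^ i) \<longlonglongrightarrow> prodinf (\<lambda>i. 1 + x * p ^ i)"
    using convergent_prod_LIMSEQ[OF convergent_prod_geometric] p0 p1 by simp
  moreover have "(\<lambda>N. \<Prod>i<N. 1 + p ^ (i + 1) / x) \<longlonglongrightarrow> prodinf (\<lambda>i. 1 + p ^ (i + 1) / x)"
  proof -
    have "(\<lambda>i. 1 + p ^ (i + 1) / x) = (\<lambda>i. 1 + (p / x) * p ^ i)" by (simp add: field_simps)
    then show ?thesis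
      using prod_lessThan_LIMSEQ[OF convergent_prod_geometric[of p "p / x"]] p0 p1 by simp
  qed
  ultimately have "(\<lambda>N. (\<Prod>i\<le>N. 1 + x * p ^ i) * (\<Prod>i<N. 1 + p ^ (i + 1) / x)) \<longlonglongrightarrow>
         prodinf (\<lambda>i. 1 + x * p ^ i) * prodinf (\<lambda>i. 1 + p ^ (i + 1) / x)"
    by (rule tendsto_mult)
  then show "(\<lambda>N. \<Sum>j\<le>N. qbinomial p (2 * N + 1) (N + 1 + j) * (p ^ triangular (j + 1) * (x ^ (j + 1) + 1 / x ^ j)))
      \<longlonglongrightarrow> prodinf (\<lambda>i. 1 + x * p ^ i) * prodinf (\<lambda>i. 1 + p ^ (i + 1) / x)"
    unfolding finite_triple_product[OF p0 p1 x0] by (simp add: mult.assoc)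
qed

theorem jacobi_cube_identity:
  fixes p :: real
  assumes p0: "0 < p" and p1: "p < 1"
  shows "(\<lambda>j. (-1) ^ j * (2 * real j + 1) * p ^ triangular (j + 1)) sums (qpoch_inf p p ^ 3)"
proof -
  have "(\<lambda>j. (-1) ^ j * (2 * real j + 1) * p ^ triangular (j + 1)) sums (qpoch_inf p p * qpoch_inf p p ^ 2)"
  proof (rule sums_of_qbinomial_weighted_limit[OF p0 p1])
    have "summable (\<lambda>j. 2 * ((real j + 1) * p ^ triangular (j + 1) * 1 ^ j))"
      using summable_triangular_powers[OF p0 p1, of 1] by (intro summable_mult) simp
    then show "summable (\<lambda>j. \<bar>(-1) ^ j * (2 * real j + 1) * p ^ triangular (j + 1)\<bar>)"
      by (rule summable_comparison_test') (use p0 in \<open>simp add: abs_mult\<close>)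
    have "(\<lambda>N. qpoch p p N ^ 2) \<longlonglongrightarrow> qpoch_inf p p ^ 2"
      by (intro tendsto_intros qfact_LIMSEQ[OF p0 p1])
    then show "(\<lambda>N. \<Sum>j\<le>N. qbinomial p (2 * N + 1) (N + 1 + j) * ((-1) ^ j * (2 * real j + 1) * p ^ triangular (j + 1)))
        \<longlonglongrightarrow> qpoch_inf p p ^ 2"
      unfolding finite_jacobi_identity[OF p0 p1] by (simp add: mult_ac)
  qed
  then show ?thesis by (simp add: power3_eq_cube power2_eq_square mult.assoc)
qed

section \<open>Absolutely summable families over the integers\<close>

lemma summable_on_comparison_real:
  fixes f g :: "'a \<Rightarrow> real"
  assumes "g summable_on A" "\<And>x. x \<in> A \<Longrightarrow> \<bar>f x\<bar> \<le> \<bar>g x\<bar>"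
  shows "f summable_on A"
proof -
  have "(\<lambda>x. norm (g x)) summable_on A" using assms(1) summable_on_iff_abs_summable_on_real by blast
  then have "(\<lambda>x. norm (f x)) summable_on A"
    by (rule summable_on_comparison_test) (use assms(2) in auto)
  then show ?thesis using summable_on_iff_abs_summable_on_real by blast
qed

lemma has_sum_product:
  fixes f :: "'a \<Rightarrow> real" and g :: "'b \<Rightarrow> real"
  assumes f: "(f has_sum F) A" and g: "(g has_sum G) B"
  shows "((\<lambda>(a, b). f a * g b) has_sum (F * G)) (A \<times> B)"
proof -
  have fa: "(\<lambda>a. \<bar>f a\<bar>) summable_on A"
    using has_sum_imp_summable[OF f] summable_on_iff_abs_summable_on_real by auto
  have ga: "(\<lambda>b. \<bar>g b\<bar>) summable_on B"
    using has_sum_imp_summable[OF g] summable_on_iff_abs_summable_on_real by auto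
  have "(\<lambda>(a, b). \<bar>f a\<bar> * \<bar>g b\<bar>) summable_on Sigma A (\<lambda>_. B)"
  proof (rule summable_on_SigmaI[where g = "\<lambda>a. \<bar>f a\<bar> * infsum (\<lambda>b. \<bar>g b\<bar>) B"])
    fix a assume "a \<in> A"
    show "((\<lambda>y. case (a, y) of (a, b) \<Rightarrow> \<bar>f a\<bar> * \<bar>g b\<bar>) has_sum \<bar>f a\<bar> * infsum (\<lambda>b. \<bar>g b\<bar>) B) B"
      using has_sum_cmult_right[OF has_sum_infsum[OF ga], of "\<bar>f a\<bar>"] by simp
  next
    show "(\<lambda>a. \<bar>f a\<bar> * infsum (\<lambda>b. \<bar>g b\<bar>) B) summable_on A"
      using summable_on_cmult_left[OF fa] by simp
  qed auto
  then have s: "(\<lambda>(a, b). f a * g b) summable_on A \<times> B"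
    by (rule summable_on_comparison_real) (auto simp: abs_mult)
  show ?thesis
  proof (rule has_sum_SigmaI[OF _ _ s])
    fix a assume "a \<in> A"
    show "((\<lambda>y. case (a, y) of (a, b) \<Rightarrow> f a * g b) has_sum f a * G) B"
      using has_sum_cmult_right[OF g, of "f a"] by simp
  next
    show "((\<lambda>a. f a * G) has_sum F * G) A" by (rule has_sum_cmult_left[OF f])
  qed
qed

lemma summable_on_int_from_nat:
  fixes f :: "int \<Rightarrow> real"
  assumes s1: "summable (\<lambda>n. \<bar>f (int n)\<bar>)" and s2: "summable (\<lambda>n. \<bar>f (- int n)\<bar>)"
  shows "f summable_on UNIV"
proof -
  have U: "UNIV = range int \<union> range (\<lambda>n. - int (Suc n))"
  proof -
    { fix z :: int have "z \<in> range int \<union> range (\<lambda>n. - int (Suc n))"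
      proof (cases "z \<ge> 0")
        case True then have "z = int (nat z)" by simp
        then show ?thesis by blast
      next
        case False then have "z = - int (Suc (nat (- z) - 1))" by simp
        then show ?thesis by blast
      qed }
    then show ?thesis by auto
  qed
  have a: "f summable_on range int"
  proof -
    have "(f \<circ> int) summable_on UNIV" using norm_summable_imp_summable_on[of "f \<circ> int"] s1 by simp
    then show ?thesis by (subst summable_on_reindex) (auto simp: inj_on_def)
  qed
  have b: "f summable_on range (\<lambda>n. - int (Suc n))"
  proof -
    have "summable (\<lambda>n. \<bar>f (- int (Suc n))\<bar>)"
      using s2 summable_Suc_iff[of "\<lambda>n. \<bar>f (- int n)\<bar>"] by simp
    then have "(f \<circ> (\<lambda>n. - int (Suc n))) summable_on UNIV"
      using norm_summable_imp_summable_on[of "f \<circ> (\<lambda>n. - int (Suc n))"] by (simp add: o_def)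
    then show ?thesis by (subst summable_on_reindex) (auto simp: inj_on_def)
  qed
  show ?thesis unfolding U by (rule summable_on_Un_disjoint[OF a b]) auto
qed

lemma has_sum_int_fold:
  fixes t :: "int \<Rightarrow> real"
  assumes ts: "t summable_on UNIV" and S: "(\<lambda>j. t (int j + 1) + t (- int j)) sums S"
  shows "(t has_sum S) UNIV"
proof -
  define P where "P = range (\<lambda>j::nat. int j + 1)"
  define N where "N = range (\<lambda>j::nat. - int j)"
  have U: "UNIV = P \<union> N"
  proof -
    { fix z :: int have "z \<in> P \<union> N"
      proof (cases "z > 0")
        case True then have "z = int (nat z - 1) + 1" by simp
        then show ?thesis unfolding P_def by blast
      next
        case False then have "z = - int (nat (- z))" by simp
        then show ?thesis unfolding N_def by blast
      qed }
    then show ?thesis by auto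
  qed
  have dj: "P \<inter> N = {}" unfolding P_def N_def by auto
  have hP: "(t has_sum infsum t P) P"
    using summable_on_subset_banach[OF ts] by (simp add: has_sum_infsum)
  have hN: "(t has_sum infsum t N) N"
    using summable_on_subset_banach[OF ts] by (simp add: has_sum_infsum)
  have sP: "(\<lambda>j. t (int j + 1)) sums infsum t P"
  proof -
    have "((t \<circ> (\<lambda>j::nat. int j + 1)) has_sum infsum t P) UNIV"
      using hP unfolding P_def by (subst (asm) has_sum_reindex) (auto simp: inj_on_def)
    then show ?thesis by (auto dest: has_sum_imp_sums simp: o_def)
  qed
  have sN: "(\<lambda>j. t (- int j)) sums infsum t N"
  proof -
    have "((t \<circ> (\<lambda>j::nat. - int j)) has_sum infsum t N) UNIV"
      using hN unfolding N_def by (subst (asm) has_sum_reindex) (auto simp: inj_on_def)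
    then show ?thesis by (auto dest: has_sum_imp_sums simp: o_def)
  qed
  have "S = infsum t P + infsum t N" using sums_add[OF sP sN] S sums_unique2 by blast
  then show ?thesis unfolding U using has_sum_Un_disjoint[OF hP hN dj] by simp
qed

lemma triangular_le_quadratic:
  fixes A :: int
  assumes "A \<ge> 1"
  shows "int (triangular (n + 1)) \<le> A * int n * int n"
proof -
  have "2 * int (triangular (n + 1)) = (int n + 1) * int n"
    using double_triangular[of "n + 1"] by (simp add: algebra_simps flip: of_nat_mult)
  moreover have "int n \<le> int n * int n"
    by (cases n) simp_all
  moreover have "int n * int n \<le> A * (int n * int n)"
    using assms mult_right_mono[of 1 A "int n * int n"] by simp
  ultimately show ?thesis by (simp add: algebra_simps)
qed

lemma summable_quadratic_powi_nat:
  fixes r :: real and A B :: int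
  assumes r0: "0 < r" and r1: "r < 1" and A: "A \<ge> 1"
  shows "summable (\<lambda>n::nat. (real n + 1) * r powi (A * int n * int n + B * int n))"
proof -
  define c where "c = r powi B"
  have c0: "c > 0" using r0 by (simp add: c_def)
  have s: "summable (\<lambda>j. (real j + 1) * r ^ triangular (j + 1) * c ^ j)"
    using summable_triangular_powers[OF r0 r1] c0 by simp
  show ?thesis
  proof (rule summable_comparison_test'[OF s])
    fix n :: nat
    have cB: "r powi (B * int n) = c ^ n" by (simp only: power_int_mult c_def power_int_of_nat)
    have e: "r powi (A * int n * int n + B * int n) = r powi (A * int n * int n) * c ^ n"
      using r0 cB by (simp add: power_int_add)
    have le: "int (triangular (n + 1)) \<le> A * int n * int n"
      by (rule triangular_le_quadratic[OF A])
    have mono: "r powi (A * int n * int n) \<le> r ^ triangular (n + 1)"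
    proof -
      obtain m where m: "A * int n * int n = int (triangular (n + 1)) + int m"
        using le zle_iff_zadd by blast
      have "r powi (A * int n * int n) = r ^ triangular (n + 1) * r ^ m"
        unfolding m using r0 by (simp add: power_int_add)
      also have "\<dots> \<le> r ^ triangular (n + 1)"
        by (rule mult_left_le) (use r0 r1 power_le_one[of r m] in auto)
      finally show ?thesis .
    qed
    have "(real n + 1) * (r powi (A * int n * int n) * c ^ n) \<le> (real n + 1) * (r ^ triangular (n + 1) * c ^ n)"
      by (intro mult_left_mono mult_right_mono mono) (use c0 in auto)
    then have "(real n + 1) * r powi (A * int n * int n + B * int n) \<le> (real n + 1) * r ^ triangular (n + 1) * c ^ n"
      unfolding e by (simp add: mult.assoc)
    moreover have "0 \<le> (real n + 1) * r powi (A * int n * int n + B * int n)" using r0 by simp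
    ultimately show "norm ((real n + 1) * r powi (A * int n * int n + B * int n)) \<le> (real n + 1) * r ^ triangular (n + 1) * c ^ n"
      by simp
  qed
qed

lemma summable_on_quadratic_powi:
  fixes r :: real and A B :: int
  assumes r0: "0 < r" and r1: "r < 1" and A: "A \<ge> 1"
  shows "(\<lambda>n::int. (1 + \<bar>of_int n\<bar>) * r powi (A * n * n + B * n)) summable_on UNIV"
proof (rule summable_on_int_from_nat)
  have "summable (\<lambda>n::nat. (real n + 1) * r powi (A * int n * int n + B * int n))"
    using summable_quadratic_powi_nat[OF r0 r1 A, of B] .
  moreover have "\<And>n::nat. \<bar>(1 + \<bar>real_of_int (int n)\<bar>) * r powi (A * int n * int n + B * int n)\<bar> = (real n + 1) * r powi (A * int n * int n + B * int n)"
    using r0 by simp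
  ultimately show "summable (\<lambda>n. \<bar>(1 + \<bar>real_of_int (int n)\<bar>) * r powi (A * int n * int n + B * int n)\<bar>)"
    by simp
  have "summable (\<lambda>n::nat. (real n + 1) * r powi (A * int n * int n + (- B) * int n))"
    using summable_quadratic_powi_nat[OF r0 r1 A, of "-B"] .
  moreover have "\<And>n::nat. \<bar>(1 + \<bar>real_of_int (- int n)\<bar>) * r powi (A * (- int n) * (- int n) + B * (- int n))\<bar>
      = (real n + 1) * r powi (A * int n * int n + (- B) * int n)"
    using r0 by simp
  ultimately show "summable (\<lambda>n. \<bar>(1 + \<bar>real_of_int (- int n)\<bar>) * r powi (A * (- int n) * (- int n) + B * (- int n))\<bar>)"
    by simp
qed

section \<open>Three theta series\<close>

definition neg_one_pow :: "int \<Rightarrow> real" where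
  "neg_one_pow a = (if even a then 1 else -1)"

lemma neg_one_pow_add: "neg_one_pow (a + b) = neg_one_pow a * neg_one_pow b"
  unfolding neg_one_pow_def by auto

lemma neg_one_pow_abs [simp]: "\<bar>neg_one_pow a\<bar> = 1"
  unfolding neg_one_pow_def by auto

lemma neg_one_pow_1 [simp]: "neg_one_pow 1 = -1"
  unfolding neg_one_pow_def by auto

lemma neg_one_pow_minus [simp]: "neg_one_pow (- a) = neg_one_pow a"
  unfolding neg_one_pow_def by auto

lemma neg_one_pow_of_nat: "neg_one_pow (int j) = (-1) ^ j"
  unfolding neg_one_pow_def by (auto simp: even_of_nat_iff)

lemma neg_one_pow_triple: "neg_one_pow (3 * a) = neg_one_pow a"
  unfolding neg_one_pow_def by auto

lemma neg_one_pow_diff: "neg_one_pow (a - b) = neg_one_pow a * neg_one_pow b"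
  using neg_one_pow_add[of a "-b"] by simp

lemma neg_one_pow_Suc: "neg_one_pow (int j + 1) = - ((-1) ^ j)"
  using neg_one_pow_of_nat[of "Suc j"] by (simp add: add.commute)

lemma power_triangular: "(q ^ k) ^ triangular (j + 1) = (q :: real) ^ (k * (j * j + j) div 2)"
proof -
  have "2 * triangular (j + 1) = j * j + j"
    using double_triangular[of "j+1"] by (simp add: algebra_simps)
  then have "k * (j * j + j) div 2 = k * triangular (j + 1)"
    by (metis mult.left_commute nonzero_mult_div_cancel_left zero_neq_numeral)
  then show ?thesis by (simp add: power_mult)
qed

lemma power_triangular_even: "(q ^ (2 * k)) ^ triangular (j + 1) = (q :: real) ^ (k * (j * j + j))"
  using power_triangular[of q "2 * k" j] by simp

definition theta_term :: "real \<Rightarrow> int \<Rightarrow> real" where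
  "theta_term q a = neg_one_pow a * q powi (a * a)"

definition cube_term :: "real \<Rightarrow> int \<Rightarrow> real" where
  "cube_term q b = of_int b * neg_one_pow b * q powi (2 * b * b + 2 * b)"

definition pent_term :: "real \<Rightarrow> int \<Rightarrow> real" where
  "pent_term q c = neg_one_pow c * q powi (6 * c * c - 2 * c)"

definition linear_theta_term :: "real \<Rightarrow> int \<Rightarrow> real" where
  "linear_theta_term q m = of_int (3 * m + 1) * q powi (3 * m * m + 2 * m)"

lemma le_one_plus_abs_mult: "0 \<le> (x::real) \<Longrightarrow> x \<le> (1 + \<bar>y\<bar>) * x"
proof -
  assume "0 \<le> x" then have "0 \<le> \<bar>y\<bar> * x" by simp
  then show ?thesis by (simp add: distrib_right)
qed

lemma abs_mult_le_one_plus_abs_mult: "0 \<le> (x::real) \<Longrightarrow> \<bar>y\<bar> * x \<le> (1 + \<bar>y\<bar>) * x"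
  by (simp add: distrib_right)

context
  fixes q :: real
  assumes q0: "q \<noteq> 0" and q1: "\<bar>q\<bar> < 1"
begin

lemma summable_on_quadratic_bound:
  fixes f :: "int \<Rightarrow> real" and A B :: int and K :: real
  assumes A: "A \<ge> 1" and K: "K \<ge> 0"
    and le: "\<And>n. \<bar>f n\<bar> \<le> K * ((1 + \<bar>of_int n\<bar>) * \<bar>q\<bar> powi (A * n * n + B * n))"
  shows "f summable_on UNIV"
proof (rule summable_on_comparison_real)
  have r0: "0 < \<bar>q\<bar>" using q0 by simp
  show "(\<lambda>n. K * ((1 + \<bar>of_int n\<bar>) * \<bar>q\<bar> powi (A * n * n + B * n))) summable_on UNIV"
    by (intro summable_on_cmult_right summable_on_quadratic_powi[OF r0 q1 A])
  fix n
  show "\<bar>f n\<bar> \<le> \<bar>K * ((1 + \<bar>of_int n\<bar>) * \<bar>q\<bar> powi (A * n * n + B * n))\<bar>"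
    using le[of n] K by (simp add: abs_mult)
qed

lemma theta_term_summable: "theta_term q summable_on UNIV"
  by (rule summable_on_quadratic_bound[where A=1 and B=0 and K=1]) (auto simp: theta_term_def abs_mult power_int_abs intro: le_one_plus_abs_mult)

lemma cube_term_summable: "cube_term q summable_on UNIV"
  by (rule summable_on_quadratic_bound[where A=2 and B=2 and K=1]) (auto simp: cube_term_def abs_mult power_int_abs intro: abs_mult_le_one_plus_abs_mult)

lemma pent_term_summable: "pent_term q summable_on UNIV"
  by (rule summable_on_quadratic_bound[where A=6 and B="-2" and K=1]) (auto simp: pent_term_def abs_mult power_int_abs intro: le_one_plus_abs_mult)

lemma linear_theta_term_summable: "linear_theta_term q summable_on UNIV"
proof (rule summable_on_quadratic_bound[where A=3 and B=2 and K=3])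
  fix n :: int
  have "\<bar>real_of_int (3 * n + 1)\<bar> \<le> 3 * (1 + \<bar>of_int n\<bar>)" by (cases "n \<ge> 0") (auto simp: abs_if)
  then show "\<bar>linear_theta_term q n\<bar> \<le> 3 * ((1 + \<bar>of_int n\<bar>) * \<bar>q\<bar> powi (3 * n * n + 2 * n))"
    unfolding linear_theta_term_def abs_mult power_int_abs
    by (metis mult.assoc mult_right_mono zero_le_power_int abs_ge_zero)
qed auto

lemma theta_term_pair:
  "(q ^ 2) ^ triangular (j + 1) * ((- q) ^ (j + 1) + 1 / (- q) ^ j)
   = theta_term q (int j + 1) + theta_term q (- int j)"
proof -
  have a: "(q ^ 2) ^ triangular (j + 1) = q ^ (j * j + j)" using power_triangular[of q 2 j] by simp
  have b: "theta_term q (int j + 1) = (-1) ^ (j + 1) * q ^ ((j + 1) * (j + 1))"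
  proof -
    have s1: "neg_one_pow (int j + 1) = (-1) ^ (j + 1)"
      using neg_one_pow_of_nat[of "j+1"] by (simp add: add.commute)
    have e1: "(int j + 1) * (int j + 1) = int ((j + 1) * (j + 1))" by (simp add: algebra_simps)
    show ?thesis unfolding theta_term_def s1 e1 power_int_of_nat ..
  qed
  have c: "theta_term q (- int j) = (-1) ^ j * q ^ (j * j)"
    unfolding theta_term_def by (simp add: neg_one_pow_of_nat power_int_of_nat flip: of_nat_mult)
  have d: "q ^ (j * j + j) * (- q) ^ (j + 1) = (-1) ^ (j + 1) * q ^ ((j + 1) * (j + 1))"
  proof -
    have "(j + 1) * (j + 1) = (j * j + j) + (j + 1)" by (simp add: algebra_simps)
    then show ?thesis by (simp add: power_add power_minus' mult_ac)
  qed
  have e: "q ^ (j * j + j) * (1 / (- q) ^ j) = (-1) ^ j * q ^ (j * j)"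
  proof -
    have "q ^ (j * j + j) = q ^ (j * j) * q ^ j" by (simp add: power_add)
    moreover have "1 / (- q) ^ j = (-1) ^ j / q ^ j"
      by (cases "even j") (simp_all add: power_minus')
    ultimately show ?thesis using q0 by simp
  qed
  show ?thesis unfolding a b c distrib_left d e ..
qed

lemma theta_term_has_sum:
  "(theta_term q has_sum (qpoch_inf q (q ^ 2)) ^ 2 * qpoch_inf (q ^ 2) (q ^ 2)) UNIV"
proof (rule has_sum_int_fold[OF theta_term_summable])
  have p0: "0 < q ^ 2" using q0 by simp
  have p1: "q ^ 2 < 1" using q1 by (simp add: abs_square_less_1)
  have x0: "- q \<noteq> 0" using q0 by simp
  have J: "(\<lambda>j. (q ^ 2) ^ triangular (j + 1) * ((- q) ^ (j + 1) + 1 / (- q) ^ j)) sums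
           (qpoch_inf (q ^ 2) (q ^ 2) * (prodinf (\<lambda>i. 1 + (- q) * (q ^ 2) ^ i) * prodinf (\<lambda>i. 1 + (q ^ 2) ^ (i + 1) / (- q))))"
    by (rule jacobi_triple_product[OF p0 p1 x0])
  have A: "prodinf (\<lambda>i. 1 + (- q) * (q ^ 2) ^ i) = qpoch_inf q (q ^ 2)"
    unfolding qpoch_inf_def by simp
  have B: "prodinf (\<lambda>i. 1 + (q ^ 2) ^ (i + 1) / (- q)) = qpoch_inf q (q ^ 2)"
    unfolding qpoch_inf_def using q0 by (intro prodinf_cong) (simp add: power_add power2_eq_square field_simps)
  show "(\<lambda>j. theta_term q (int j + 1) + theta_term q (- int j)) sums ((qpoch_inf q (q ^ 2))\<^sup>2 * qpoch_inf (q ^ 2) (q ^ 2))"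
    using J unfolding theta_term_pair A B by (simp add: power2_eq_square mult_ac)
qed


lemma pent_term_pair:
  "(q ^ 12) ^ triangular (j + 1) * ((- (q ^ 4)) ^ (j + 1) + 1 / (- (q ^ 4)) ^ j)
   = pent_term q (int j + 1) + pent_term q (- int j)"
proof -
  have a: "(q ^ 12) ^ triangular (j + 1) = q ^ (6 * (j * j + j))"
    using power_triangular_even[of q 6 j] by simp
  have b: "pent_term q (int j + 1) = (-1) ^ (j + 1) * q ^ (6 * (j * j + j) + 4 * (j + 1))"
  proof -
    have e1: "6 * (int j + 1) * (int j + 1) - 2 * (int j + 1) = int (6 * (j * j + j) + 4 * (j + 1))"
      by (simp add: algebra_simps)
    show ?thesis unfolding pent_term_def e1 power_int_of_nat neg_one_pow_Suc by simp
  qed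
  have c: "pent_term q (- int j) = (-1) ^ j * q ^ (6 * (j * j) + 2 * j)"
  proof -
    have e1: "6 * (- int j) * (- int j) - 2 * (- int j) = int (6 * (j * j) + 2 * j)"
      by (simp add: algebra_simps)
    show ?thesis unfolding pent_term_def e1 power_int_of_nat neg_one_pow_minus neg_one_pow_of_nat ..
  qed
  have d: "q ^ (6 * (j * j + j)) * (- (q ^ 4)) ^ (j + 1) = (-1) ^ (j + 1) * q ^ (6 * (j * j + j) + 4 * (j + 1))"
  proof -
    have h0: "(- (q ^ 4)) ^ (j + 1) = ((-1) * q ^ 4) ^ (j + 1)" by simp
    have h: "(- (q ^ 4)) ^ (j + 1) = (-1) ^ (j + 1) * q ^ (4 * (j + 1))"
      unfolding h0 power_mult_distrib power_mult ..
    show ?thesis unfolding h by (simp only: power_add mult_ac)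
  qed
  have e: "q ^ (6 * (j * j + j)) * (1 / (- (q ^ 4)) ^ j) = (-1) ^ j * q ^ (6 * (j * j) + 2 * j)"
  proof -
    have "q ^ (6 * (j * j + j)) = q ^ (6 * (j * j) + 2 * j) * q ^ (4 * j)"
      by (simp add: algebra_simps flip: power_add)
    moreover have "1 / (- (q ^ 4)) ^ j = (-1) ^ j / q ^ (4 * j)"
      by (cases "even j") (simp_all add: power_minus' power_mult)
    ultimately show ?thesis using q0 by simp
  qed
  show ?thesis unfolding a b c by (simp only: distrib_left[of "q ^ (6 * (j * j + j))"] d e)
qed

lemma pent_term_has_sum: "(pent_term q has_sum qpoch_inf (q ^ 4) (q ^ 4)) UNIV"
proof (rule has_sum_int_fold[OF pent_term_summable])
  have p0: "0 < q ^ 12" using q0 by (simp add: zero_less_power_eq)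
  have p1: "q ^ 12 < 1" using power_less_one_iff[of "\<bar>q\<bar>" 12] q1 by simp
  have x0: "- (q ^ 4) \<noteq> 0" using q0 by simp
  have J: "(\<lambda>j. (q ^ 12) ^ triangular (j + 1) * ((- (q ^ 4)) ^ (j + 1) + 1 / (- (q ^ 4)) ^ j)) sums
           (qpoch_inf (q ^ 12) (q ^ 12) * (prodinf (\<lambda>i. 1 + (- (q ^ 4)) * (q ^ 12) ^ i) * prodinf (\<lambda>i. 1 + (q ^ 12) ^ (i + 1) / (- (q ^ 4)))))"
    by (rule jacobi_triple_product[OF p0 p1 x0])
  have A: "prodinf (\<lambda>i. 1 + (- (q ^ 4)) * (q ^ 12) ^ i) = qpoch_inf (q ^ 4) (q ^ 12)"
    unfolding qpoch_inf_def by simp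
  have B: "prodinf (\<lambda>i. 1 + (q ^ 12) ^ (i + 1) / (- (q ^ 4))) = qpoch_inf (q ^ 8) (q ^ 12)"
  proof -
    have "\<And>i. (q ^ 12) ^ (i + 1) / (q ^ 4) = q ^ 8 * (q ^ 12) ^ i"
    proof -
      fix i :: nat
      have h: "(q ^ 12) ^ (i + 1) = q ^ 8 * (q ^ 12) ^ i * q ^ 4"
        by (simp add: power_add mult_ac flip: power_mult)
      have "(q ^ 12) ^ (i + 1) / (q ^ 4) = q ^ 8 * (q ^ 12) ^ i * q ^ 4 / q ^ 4" by (simp only: h)
      also have "\<dots> = q ^ 8 * (q ^ 12) ^ i" using q0 by simp
      finally show "(q ^ 12) ^ (i + 1) / (q ^ 4) = q ^ 8 * (q ^ 12) ^ i" .
    qed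
    then show ?thesis unfolding qpoch_inf_def by (intro prodinf_cong) simp
  qed
  have S: "qpoch_inf (q ^ 4) (q ^ 4) = qpoch_inf (q ^ 4) (q ^ 12) * qpoch_inf (q ^ 8) (q ^ 12) * qpoch_inf (q ^ 12) (q ^ 12)"
  proof -
    have Q: "\<bar>q ^ 4\<bar> < 1" using power_less_one_iff[of "\<bar>q\<bar>" 4] q1 by (simp add: power_abs)
    have "qpoch_inf (q ^ 4) (q ^ 4) = (\<Prod>r<3. qpoch_inf ((q ^ 4) ^ (r + 1)) ((q ^ 4) ^ 3))"
      by (rule qpoch_inf_split[OF Q]) simp
    also have "\<dots> = qpoch_inf (q ^ 4) (q ^ 12) * qpoch_inf (q ^ 8) (q ^ 12) * qpoch_inf (q ^ 12) (q ^ 12)"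
      by (simp add: numeral_3_eq_3 flip: power_mult)
    finally show ?thesis .
  qed
  show "(\<lambda>j. pent_term q (int j + 1) + pent_term q (- int j)) sums qpoch_inf (q ^ 4) (q ^ 4)"
    using J unfolding pent_term_pair A B S by (simp add: mult_ac)
qed

lemma cube_term_has_sum: "(cube_term q has_sum (qpoch_inf (q ^ 4) (q ^ 4)) ^ 3) UNIV"
proof -
  define t where "t z = cube_term q (z - 1)" for z
  have p0: "0 < q ^ 4" using q0 by (simp add: zero_less_power_eq)
  have p1: "q ^ 4 < 1" using power_less_one_iff[of "\<bar>q\<bar>" 4] q1 by simp
  have ts: "t summable_on UNIV"
  proof -
    have "(cube_term q \<circ> (\<lambda>z. z - 1)) summable_on UNIV"
      using cube_term_summable summable_on_reindex[of "\<lambda>z::int. z - 1" UNIV "cube_term q"]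
      by (simp add: inj_on_def surj_def)
    then show ?thesis unfolding t_def o_def .
  qed
  have J: "(\<lambda>j. (-1) ^ j * (2 * real j + 1) * (q ^ 4) ^ triangular (j + 1)) sums (qpoch_inf (q ^ 4) (q ^ 4) ^ 3)"
    by (rule jacobi_cube_identity[OF p0 p1])
  have terms: "(-1) ^ j * (2 * real j + 1) * (q ^ 4) ^ triangular (j + 1) = t (int j + 1) + t (- int j)" for j
  proof -
    have a: "(q ^ 4) ^ triangular (j + 1) = q ^ (2 * (j * j + j))"
      using power_triangular_even[of q 2 j] by simp
    have b: "t (int j + 1) = real j * (-1) ^ j * q ^ (2 * (j * j + j))"
    proof -
      have e1: "2 * int j * int j + 2 * int j = int (2 * (j * j + j))" by (simp add: algebra_simps)
      show ?thesis unfolding t_def cube_term_def by (simp add: e1 neg_one_pow_of_nat del: of_nat_mult of_nat_add)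
    qed
    have c: "t (- int j) = (real j + 1) * (-1) ^ j * q ^ (2 * (j * j + j))"
    proof -
      have e1: "2 * (- int j - 1) * (- int j - 1) + 2 * (- int j - 1) = int (2 * (j * j + j))"
        by (simp add: algebra_simps)
      have s: "neg_one_pow (- int j - 1) = - ((-1) ^ j)"
        using neg_one_pow_Suc[of j] neg_one_pow_minus[of "int j + 1"] by simp
      show ?thesis unfolding t_def cube_term_def e1 power_int_of_nat s by (simp add: algebra_simps)
    qed
    show ?thesis unfolding a b c by (simp add: algebra_simps)
  qed
  have "(t has_sum (qpoch_inf (q ^ 4) (q ^ 4)) ^ 3) UNIV"
  proof (rule has_sum_int_fold[OF ts])
    from J show "(\<lambda>j. t (int j + 1) + t (- int j)) sums (qpoch_inf (q ^ 4) (q ^ 4)) ^ 3"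
      by (simp only: terms)
  qed
  then show ?thesis
    by (subst has_sum_reindex_bij_witness[where i="\<lambda>z. z - 1" and j="\<lambda>z. z + 1" and h=t]) (auto simp: t_def)
qed

end

section \<open>A double theta series summed in two ways\<close>

lemma has_sum_0_antisymmetric:
  fixes f :: "'a \<Rightarrow> real"
  assumes "f summable_on A"
    and "\<And>x. x \<in> A \<Longrightarrow> \<sigma> x \<in> A" "\<And>x. x \<in> A \<Longrightarrow> \<sigma> (\<sigma> x) = x"
    and "\<And>x. x \<in> A \<Longrightarrow> f (\<sigma> x) = - f x"
  shows "(f has_sum 0) A"
proof -
  define V where "V = infsum f A"
  have hV: "(f has_sum V) A" using assms(1) by (simp add: V_def)
  have "((\<lambda>x. - f x) has_sum V) A"
    by (subst has_sum_reindex_bij_witness[where i = \<sigma> and j = \<sigma> and h = f and T = A]) (use hV assms in auto)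
  then have "(f has_sum - V) A" by (simp add: has_sum_uminus)
  then have "V = 0" using hV has_sum_unique by fastforce
  then show ?thesis using hV by simp
qed

text \<open>The weight \<open>2 b - a\<close> is chosen so that the sum factors into theta series in \<open>a\<close> and \<open>b\<close>
  (first computation), while the substitutions below, which depend on \<open>(2 b - a) mod 3\<close>, turn the
  exponent into \<open>3 m\<^sup>2 + 2 m + 6 c\<^sup>2 - 2 c - 1\<close> (second computation).\<close>

definition double_theta_term :: "real \<Rightarrow> int \<times> int \<Rightarrow> real" where
  "double_theta_term q x = (case x of (a, b) \<Rightarrow>
     of_int (2 * b - a) * neg_one_pow (a + b) * q powi (a * a - 2 * a + 2 * b * b + 2 * b))"

context
  fixes q :: real
  assumes q0: "q \<noteq> 0" and q1: "\<bar>q\<bar> < 1"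
begin

lemma powi_add: "q powi (a + b) = q powi a * q powi b"
  using q0 by (simp add: power_int_add)

lemma shifted_theta_has_sum:
  "((\<lambda>a. neg_one_pow a * q powi (a * a - 2 * a)) has_sum
     - (1 / q) * (qpoch_inf q (q ^ 2) ^ 2 * qpoch_inf (q ^ 2) (q ^ 2))) UNIV"
proof -
  have h: "((\<lambda>a. theta_term q (a - 1)) has_sum ((qpoch_inf q (q ^ 2)) ^ 2 * qpoch_inf (q ^ 2) (q ^ 2))) UNIV"
    using theta_term_has_sum[OF q0 q1]
    by (subst has_sum_reindex_bij_witness[where i="\<lambda>z. z + 1" and j="\<lambda>z. z - 1" and h="theta_term q"]) auto
  have e: "neg_one_pow a * q powi (a * a - 2 * a) = - (1 / q) * theta_term q (a - 1)" for a
  proof -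
    have "(a - 1) * (a - 1) = (a * a - 2 * a) + 1" by (simp add: algebra_simps)
    then have "theta_term q (a - 1) = - neg_one_pow a * (q powi (a * a - 2 * a) * q)"
      unfolding theta_term_def by (simp add: powi_add neg_one_pow_diff)
    then show ?thesis using q0 by simp
  qed
  show ?thesis unfolding e by (rule has_sum_cmult_right[OF h])
qed

lemma signed_theta_has_sum_0: "((\<lambda>b. neg_one_pow b * q powi (2 * b * b + 2 * b)) has_sum 0) UNIV"
proof (rule has_sum_0_antisymmetric[where \<sigma> = "\<lambda>b. -1 - b"])
  show "(\<lambda>b. neg_one_pow b * q powi (2 * b * b + 2 * b)) summable_on UNIV"
    by (rule summable_on_quadratic_bound[OF q0 q1, where A=2 and B=2 and K=1])
       (auto simp: abs_mult power_int_abs intro: le_one_plus_abs_mult)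
  fix b :: int
  have "q powi (2 * (-1 - b) * (-1 - b) + 2 * (-1 - b)) = q powi (2 * b * b + 2 * b)"
    by (rule arg_cong[where f = "\<lambda>e. q powi e"]) (simp add: algebra_simps)
  moreover have "neg_one_pow (-1 - b) = - neg_one_pow b" using neg_one_pow_diff[of "-1" b] by simp
  ultimately show "neg_one_pow (-1 - b) * q powi (2 * (-1 - b) * (-1 - b) + 2 * (-1 - b))
      = - (neg_one_pow b * q powi (2 * b * b + 2 * b))"
    by (simp only: mult_minus_left)
qed auto

lemma double_theta_has_sum_product:
  "(double_theta_term q has_sum
     2 * (- (1 / q) * (qpoch_inf q (q ^ 2) ^ 2 * qpoch_inf (q ^ 2) (q ^ 2))) * qpoch_inf (q ^ 4) (q ^ 4) ^ 3) UNIV"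
proof -
  define g where "g a = neg_one_pow a * q powi (a * a - 2 * a)" for a
  define h where "h b = neg_one_pow b * q powi (2 * b * b + 2 * b)" for b
  have "(\<lambda>a. of_int a * g a) summable_on UNIV"
    by (rule summable_on_quadratic_bound[OF q0 q1, where A=1 and B="-2" and K=1])
       (auto simp: g_def abs_mult power_int_abs intro: abs_mult_le_one_plus_abs_mult)
  then have "((\<lambda>a. of_int a * g a) has_sum infsum (\<lambda>a. of_int a * g a) UNIV) UNIV"
    by simp
  from has_sum_product[OF this signed_theta_has_sum_0]
  have "((\<lambda>(a, b). of_int a * g a * h b) has_sum infsum (\<lambda>a. of_int a * g a) UNIV * 0) (UNIV \<times> UNIV)"
    unfolding h_def .
  then have "((\<lambda>x. - (case x of (a, b) \<Rightarrow> of_int a * g a * h b)) has_sum 0) UNIV"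
    by (simp add: has_sum_uminus)
  moreover have "((\<lambda>(a, b). g a * cube_term q b) has_sum
      - (1 / q) * (qpoch_inf q (q ^ 2) ^ 2 * qpoch_inf (q ^ 2) (q ^ 2)) * qpoch_inf (q ^ 4) (q ^ 4) ^ 3)
      (UNIV \<times> UNIV)"
    using has_sum_product[OF shifted_theta_has_sum cube_term_has_sum[OF q0 q1]] unfolding g_def .
  ultimately have "((\<lambda>x. 2 * (case x of (a, b) \<Rightarrow> g a * cube_term q b) + - (case x of (a, b) \<Rightarrow> of_int a * g a * h b))
      has_sum 2 * (- (1 / q) * (qpoch_inf q (q ^ 2) ^ 2 * qpoch_inf (q ^ 2) (q ^ 2)) * qpoch_inf (q ^ 4) (q ^ 4) ^ 3) + 0)
      UNIV"
    by (intro has_sum_add has_sum_cmult_right) simp_all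
  moreover have "2 * (case x of (a, b) \<Rightarrow> g a * cube_term q b) + - (case x of (a, b) \<Rightarrow> of_int a * g a * h b)
      = double_theta_term q x" for x
  proof (cases x)
    case (Pair a b)
    have "q powi (a * a - 2 * a + 2 * b * b + 2 * b) = q powi (a * a - 2 * a) * q powi (2 * b * b + 2 * b)"
      by (metis add.assoc powi_add)
    then show ?thesis
      unfolding Pair double_theta_term_def cube_term_def g_def h_def case_prod_conv
      by (simp add: neg_one_pow_add algebra_simps)
  qed
  ultimately show ?thesis by (simp add: mult.assoc)
qed

end

text \<open>Parametrisations of the classes \<open>2 b - a \<equiv> 0\<close> and \<open>2 b - a \<equiv> 2 (mod 3)\<close> by \<open>(m, c) \<in> \<int>\<^sup>2\<close>,
  and a sign-reversing involution of the class \<open>2 b - a \<equiv> 1\<close>.\<close>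

definition param0 :: "int \<times> int \<Rightarrow> int \<times> int" where
  "param0 y = (case y of (m, c) \<Rightarrow> (2 * c + m + 1, c - m - 1))"

definition param0_inv :: "int \<times> int \<Rightarrow> int \<times> int" where
  "param0_inv x = (case x of (a, b) \<Rightarrow> (- ((2 * b - a) div 3) - 1, b - (2 * b - a) div 3))"

definition param2 :: "int \<times> int \<Rightarrow> int \<times> int" where
  "param2 y = (case y of (m, c) \<Rightarrow> (1 - m - 2 * c, m - c))"

definition param2_inv :: "int \<times> int \<Rightarrow> int \<times> int" where
  "param2_inv x = (case x of (a, b) \<Rightarrow> ((2 * b - a + 1) div 3, (2 * b - a + 1) div 3 - b))"

definition class1_involution :: "int \<times> int \<Rightarrow> int \<times> int" where
  "class1_involution x = (case x of (a, b) \<Rightarrow>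
     (2 * (2 * ((2 * b - a) div 3) + 1 - b) - (2 * b - a), 2 * ((2 * b - a) div 3) + 1 - b))"

definition mod3_class :: "int \<Rightarrow> (int \<times> int) set" where
  "mod3_class r = {x. (2 * snd x - fst x) mod 3 = r}"

lemma mod3_classes_cover: "UNIV = mod3_class 0 \<union> mod3_class 1 \<union> mod3_class 2"
  unfolding mod3_class_def by auto

lemma param0_bij:
  shows "param0_inv (param0 y) = y" "param0 y \<in> mod3_class 0" "x \<in> mod3_class 0 \<Longrightarrow> param0 (param0_inv x) = x"
proof -
  obtain m c where y: "y = (m, c)" by (cases y)
  have k: "2 * (c - m - 1) - (2 * c + m + 1) = 3 * (- m - 1)" by simp
  have kd: "(2 * (c - m - 1) - (2 * c + m + 1)) div 3 = - m - 1" unfolding k by simp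
  show "param0_inv (param0 y) = y" unfolding y param0_def param0_inv_def case_prod_conv kd by simp
  show "param0 y \<in> mod3_class 0" unfolding y param0_def mod3_class_def by (simp add: k)
next
  assume "x \<in> mod3_class 0"
  obtain a b where x: "x = (a, b)" by (cases x)
  have "(2 * b - a) mod 3 = 0" using \<open>x \<in> mod3_class 0\<close> unfolding mod3_class_def x by simp
  then have d: "2 * b - a = 3 * ((2 * b - a) div 3)" by presburger
  show "param0 (param0_inv x) = x" unfolding x param0_def param0_inv_def using d by simp
qed

lemma param2_bij:
  shows "param2_inv (param2 y) = y" "param2 y \<in> mod3_class 2" "x \<in> mod3_class 2 \<Longrightarrow> param2 (param2_inv x) = x"
proof -
  obtain m c where y: "y = (m, c)" by (cases y)
  have k: "2 * (m - c) - (1 - m - 2 * c) + 1 = 3 * m" by simp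
  have k2: "2 * (m - c) - (1 - m - 2 * c) = 3 * m - 1" by simp
  have kd: "(2 * (m - c) - (1 - m - 2 * c) + 1) div 3 = m" unfolding k by simp
  show "param2_inv (param2 y) = y" unfolding y param2_def param2_inv_def case_prod_conv kd by simp
  show "param2 y \<in> mod3_class 2" unfolding y param2_def mod3_class_def by (simp add: k2) presburger
next
  assume "x \<in> mod3_class 2"
  obtain a b where x: "x = (a, b)" by (cases x)
  have "(2 * b - a) mod 3 = 2" using \<open>x \<in> mod3_class 2\<close> unfolding mod3_class_def x by simp
  then have d: "2 * b - a + 1 = 3 * ((2 * b - a + 1) div 3)" by presburger
  show "param2 (param2_inv x) = x" unfolding x param2_def param2_inv_def using d by simp
qed

lemma class1_involution_props:
  assumes "x \<in> mod3_class 1"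
  shows "class1_involution (class1_involution x) = x" "class1_involution x \<in> mod3_class 1"
proof -
  obtain a b where x: "x = (a, b)" by (cases x)
  have "(2 * b - a) mod 3 = 1" using assms unfolding mod3_class_def x by simp
  then have d: "2 * b - a = 3 * ((2 * b - a) div 3) + 1" by presburger
  define d0 where "d0 = (2 * b - a) div 3"
  have dd: "2 * b - a = 3 * d0 + 1" using d d0_def by simp
  have k': "2 * (2 * d0 + 1 - b) - (2 * (2 * d0 + 1 - b) - (2 * b - a)) = 2 * b - a" by simp
  show "class1_involution (class1_involution x) = x" unfolding x class1_involution_def
    using dd by (simp add: k' d0_def[symmetric])
  show "class1_involution x \<in> mod3_class 1" unfolding x class1_involution_def mod3_class_def
    using dd by (simp add: d0_def[symmetric])
qed

definition paired_exponent :: "int \<Rightarrow> int \<Rightarrow> int" where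
  "paired_exponent m c = 6 * c * c - 2 * c + 3 * m * m + 2 * m - 1"

context
  fixes q :: real
  assumes q0: "q \<noteq> 0" and q1: "\<bar>q\<bar> < 1"
begin

lemma double_theta_term_summable: "double_theta_term q summable_on UNIV"
  using double_theta_has_sum_product[OF q0 q1] has_sum_imp_summable by blast

lemma double_theta_involution:
  assumes "x \<in> mod3_class 1"
  shows "double_theta_term q (class1_involution x) = - double_theta_term q x"
proof -
  obtain a b where x: "x = (a, b)" by (cases x)
  have "(2 * b - a) mod 3 = 1" using assms unfolding mod3_class_def x by simp
  then have d: "2 * b - a = 3 * ((2 * b - a) div 3) + 1" by presburger
  define d0 where "d0 = (2 * b - a) div 3"
  have dd: "a = 2 * b - 3 * d0 - 1" using d d0_def by simp
  have ix: "class1_involution x = (d0 + 1 - 2 * b, 2 * d0 + 1 - b)"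
    unfolding x class1_involution_def case_prod_conv d0_def[symmetric] using dd by simp
  have w: "2 * (2 * d0 + 1 - b) - (d0 + 1 - 2 * b) = 2 * b - a" using dd by simp
  have s: "neg_one_pow (d0 + 1 - 2 * b + (2 * d0 + 1 - b)) = - neg_one_pow (a + b)"
  proof -
    have "d0 + 1 - 2 * b + (2 * d0 + 1 - b) = (a + b) + 3 * (2 * d0 + 1 - 2 * b)" using dd by simp
    then have "neg_one_pow (d0 + 1 - 2 * b + (2 * d0 + 1 - b)) = neg_one_pow ((a + b) + 3 * (2 * d0 + 1 - 2 * b))"
      by (rule arg_cong[where f=neg_one_pow])
    also have "\<dots> = neg_one_pow (a + b) * neg_one_pow (2 * d0 + 1 - 2 * b)"
      by (simp only: neg_one_pow_add neg_one_pow_triple)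
    finally have "neg_one_pow (d0 + 1 - 2 * b + (2 * d0 + 1 - b)) = neg_one_pow (a + b) * neg_one_pow (2 * d0 + 1 - 2 * b)" .
    moreover have "neg_one_pow (2 * d0 + 1 - 2 * b) = -1"
    proof -
      have "odd (2 * d0 + 1 - 2 * b)" by presburger
      then show ?thesis unfolding neg_one_pow_def by simp
    qed
    ultimately show ?thesis by simp
  qed
  have e: "(d0 + 1 - 2 * b) * (d0 + 1 - 2 * b) - 2 * (d0 + 1 - 2 * b) + 2 * (2 * d0 + 1 - b) * (2 * d0 + 1 - b) + 2 * (2 * d0 + 1 - b)
      = a * a - 2 * a + 2 * b * b + 2 * b"
    unfolding dd by (simp add: algebra_simps)
  show ?thesis unfolding ix unfolding x double_theta_term_def case_prod_conv w s e by simp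
qed

lemma double_theta_has_sum_class_1: "(double_theta_term q has_sum 0) (mod3_class 1)"
  by (rule has_sum_0_antisymmetric[where \<sigma> = class1_involution])
     (use summable_on_subset_banach[OF double_theta_term_summable] class1_involution_props
          double_theta_involution in auto)

lemma double_theta_param0:
  "double_theta_term q (param0 (m, c))
   = - 3 * (real_of_int m + 1) * neg_one_pow c * q powi (paired_exponent m c)"
proof -
  have w: "2 * (c - m - 1) - (2 * c + m + 1) = - 3 * m - 3" by simp
  have s: "neg_one_pow (2 * c + m + 1 + (c - m - 1)) = neg_one_pow c"
  proof -
    have "2 * c + m + 1 + (c - m - 1) = 3 * c" by simp
    then show ?thesis by (simp add: neg_one_pow_triple)
  qed
  have e: "(2 * c + m + 1) * (2 * c + m + 1) - 2 * (2 * c + m + 1) + 2 * (c - m - 1) * (c - m - 1) + 2 * (c - m - 1) = paired_exponent m c"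
    unfolding paired_exponent_def by (simp add: algebra_simps)
  show ?thesis unfolding param0_def double_theta_term_def case_prod_conv w s e by (simp add: algebra_simps)
qed

lemma double_theta_param2:
  "double_theta_term q (param2 (m, c))
   = (1 - 3 * real_of_int m) * neg_one_pow c * q powi (paired_exponent m c)"
proof -
  have w: "2 * (m - c) - (1 - m - 2 * c) = 3 * m - 1" by simp
  have s: "neg_one_pow (1 - m - 2 * c + (m - c)) = - neg_one_pow c"
  proof -
    have "1 - m - 2 * c + (m - c) = 1 - 3 * c" by simp
    then show ?thesis by (simp add: neg_one_pow_diff neg_one_pow_triple)
  qed
  have e: "(1 - m - 2 * c) * (1 - m - 2 * c) - 2 * (1 - m - 2 * c) + 2 * (m - c) * (m - c) + 2 * (m - c) = paired_exponent m c"
    unfolding paired_exponent_def by (simp add: algebra_simps)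
  show ?thesis unfolding param2_def double_theta_term_def case_prod_conv w s e by (simp add: algebra_simps)
qed

lemma double_theta_param_sum:
  "double_theta_term q (param0 y) + double_theta_term q (param2 y)
   = - (2 / q) * (case y of (m, c) \<Rightarrow> linear_theta_term q m * pent_term q c)"
proof (cases y)
  case (Pair m c)
  have pe: "q powi (3 * m * m + 2 * m) * q powi (6 * c * c - 2 * c) = q * q powi (paired_exponent m c)"
  proof -
    have h: "3 * m * m + 2 * m + (6 * c * c - 2 * c) = paired_exponent m c + 1"
      unfolding paired_exponent_def by simp
    have "q powi (3 * m * m + 2 * m) * q powi (6 * c * c - 2 * c) = q powi (3 * m * m + 2 * m + (6 * c * c - 2 * c))"
      by (rule powi_add[OF q0 q1, symmetric])
    also have "\<dots> = q powi (paired_exponent m c + 1)" by (simp only: h)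
    also have "\<dots> = q * q powi (paired_exponent m c)" using q0 by (simp add: power_int_add_1')
    finally show ?thesis .
  qed
  have "- (2 / q) * (linear_theta_term q m * pent_term q c) = - (2 / q) * (real_of_int (3 * m + 1) * neg_one_pow c * (q powi (3 * m * m + 2 * m) * q powi (6 * c * c - 2 * c)))"
    unfolding linear_theta_term_def pent_term_def by (simp add: mult_ac)
  also have "\<dots> = - 2 * real_of_int (3 * m + 1) * neg_one_pow c * q powi (paired_exponent m c)"
    unfolding pe using q0 by (simp add: field_simps)
  finally show ?thesis unfolding Pair double_theta_param0 double_theta_param2 by (simp add: algebra_simps)
qed

lemma double_theta_has_sum_classes_0_2:
  "(double_theta_term q has_sum (- (2 / q) * (infsum (linear_theta_term q) UNIV * qpoch_inf (q ^ 4) (q ^ 4))))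
     (mod3_class 0 \<union> mod3_class 2)"
proof -
  define V0 where "V0 = infsum (double_theta_term q) (mod3_class 0)"
  define V2 where "V2 = infsum (double_theta_term q) (mod3_class 2)"
  have h0: "(double_theta_term q has_sum V0) (mod3_class 0)"
    using summable_on_subset_banach[OF double_theta_term_summable] by (simp add: V0_def)
  have h2: "(double_theta_term q has_sum V2) (mod3_class 2)"
    using summable_on_subset_banach[OF double_theta_term_summable] by (simp add: V2_def)
  have "((\<lambda>y. double_theta_term q (param0 y)) has_sum V0) UNIV"
    by (subst has_sum_reindex_bij_witness[where i=param0_inv and j=param0 and h="double_theta_term q" and T="mod3_class 0"])
       (use h0 param0_bij in auto)
  moreover have "((\<lambda>y. double_theta_term q (param2 y)) has_sum V2) UNIV"
    by (subst has_sum_reindex_bij_witness[where i=param2_inv and j=param2 and h="double_theta_term q" and T="mod3_class 2"])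
       (use h2 param2_bij in auto)
  ultimately have "((\<lambda>y. - (2 / q) * (case y of (m, c) \<Rightarrow> linear_theta_term q m * pent_term q c)) has_sum (V0 + V2)) UNIV"
    unfolding double_theta_param_sum[symmetric] by (rule has_sum_add)
  moreover have "((\<lambda>y. - (2 / q) * (case y of (m, c) \<Rightarrow> linear_theta_term q m * pent_term q c)) has_sum
      (- (2 / q) * (infsum (linear_theta_term q) UNIV * qpoch_inf (q ^ 4) (q ^ 4)))) UNIV"
  proof -
    have "(linear_theta_term q has_sum infsum (linear_theta_term q) UNIV) UNIV"
      using linear_theta_term_summable[OF q0 q1] by simp
    from has_sum_cmult_right[OF has_sum_product[OF this pent_term_has_sum[OF q0 q1]], of "- (2 / q)"]
    show ?thesis by simp
  qed
  ultimately have "V0 + V2 = - (2 / q) * (infsum (linear_theta_term q) UNIV * qpoch_inf (q ^ 4) (q ^ 4))"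
    by (rule has_sum_unique)
  moreover have "mod3_class 0 \<inter> mod3_class 2 = {}" unfolding mod3_class_def by auto
  ultimately show ?thesis using has_sum_Un_disjoint[OF h0 h2] by simp
qed

lemma double_theta_has_sum_mod3:
  "(double_theta_term q has_sum (- (2 / q) * (infsum (linear_theta_term q) UNIV * qpoch_inf (q ^ 4) (q ^ 4)))) UNIV"
proof -
  have "(mod3_class 0 \<union> mod3_class 2) \<inter> mod3_class 1 = {}" unfolding mod3_class_def by auto
  from has_sum_Un_disjoint[OF double_theta_has_sum_classes_0_2 double_theta_has_sum_class_1 this]
  show ?thesis using mod3_classes_cover by (simp add: Un_ac)
qed

theorem linear_theta_has_sum:
  "(linear_theta_term q has_sum
     qpoch_inf q (q ^ 2) ^ 2 * qpoch_inf (q ^ 2) (q ^ 2) * qpoch_inf (q ^ 4) (q ^ 4) ^ 2) UNIV"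
proof -
  define Ev where "Ev = qpoch_inf (q ^ 4) (q ^ 4)"
  define Phi where "Phi = (qpoch_inf q (q ^ 2)) ^ 2 * qpoch_inf (q ^ 2) (q ^ 2)"
  have Q: "\<bar>q ^ 4\<bar> < 1" using power_less_one_iff[of "\<bar>q\<bar>" 4] q1 by (simp add: power_abs)
  have Ev0: "Ev \<noteq> 0" unfolding Ev_def by (rule qpoch_inf_nonzero[OF Q Q])
  have "2 * (- (1 / q) * Phi) * Ev ^ 3 = - (2 / q) * (infsum (linear_theta_term q) UNIV * Ev)"
    using has_sum_unique[OF double_theta_has_sum_product[OF q0 q1] double_theta_has_sum_mod3] unfolding Ev_def Phi_def by (simp add: mult.assoc)
  then have "infsum (linear_theta_term q) UNIV * Ev = Phi * Ev ^ 3"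
    using q0 by (simp add: field_simps)
  then have "infsum (linear_theta_term q) UNIV = Phi * Ev ^ 2"
    using Ev0 by (simp add: power3_eq_cube power2_eq_square)
  moreover have "(linear_theta_term q has_sum infsum (linear_theta_term q) UNIV) UNIV"
    using linear_theta_term_summable[OF q0 q1] by simp
  ultimately show ?thesis unfolding Ev_def Phi_def by simp
qed

end

section \<open>Weighted compositions\<close>

definition part_of :: "int \<Rightarrow> nat" where "part_of j = nat (j * (3 * j + 2))"

lemma part_int_ge_abs: "j \<noteq> 0 \<Longrightarrow> j * (3 * j + 2) \<ge> \<bar>j\<bar>" for j :: int
proof (cases "j > 0")
  case True
  then have "j * 1 \<le> j * (3 * j + 2)" by (intro mult_left_mono) auto
  then show ?thesis using True by simp
next
  case False
  assume "j \<noteq> 0"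
  with False have "j \<le> -1" by simp
  then have "(- j) * 1 \<le> (- j) * (- 3 * j - 2)" by (intro mult_left_mono) auto
  then show ?thesis using False by (simp add: algebra_simps)
qed

lemma part_of_pos: "j \<noteq> 0 \<Longrightarrow> part_of j > 0"
proof -
  assume j: "j \<noteq> 0"
  then have "j * (3 * j + 2) > 0" using part_int_ge_abs[OF j] by linarith
  then show ?thesis unfolding part_of_def by simp
qed

lemma abs_le_part_of: "j \<noteq> 0 \<Longrightarrow> \<bar>j\<bar> \<le> int (part_of j)"
proof -
  assume j: "j \<noteq> 0"
  have h: "\<bar>j\<bar> \<le> j * (3 * j + 2)" using part_int_ge_abs[OF j] .
  then have "0 \<le> j * (3 * j + 2)" using abs_ge_zero[of j] by linarith
  then show ?thesis using h unfolding part_of_def by simp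
qed

lemma part_int_inj: "j1 * (3 * j1 + 2) = j2 * (3 * j2 + 2) \<Longrightarrow> j1 = j2" for j1 j2 :: int
proof -
  assume h: "j1 * (3 * j1 + 2) = j2 * (3 * j2 + 2)"
  have "(j1 - j2) * (3 * (j1 + j2) + 2) = 0" using h by (simp add: algebra_simps)
  moreover have "3 * (j1 + j2) + 2 \<noteq> 0" by presburger
  ultimately show ?thesis by simp
qed

lemma part_of_inj: "j1 \<noteq> 0 \<Longrightarrow> j2 \<noteq> 0 \<Longrightarrow> part_of j1 = part_of j2 \<Longrightarrow> j1 = j2"
  using part_int_ge_abs[of j1] part_int_ge_abs[of j2] part_int_inj[of j1 j2] unfolding part_of_def by simp

lemma part_of_0: "part_of 0 = 0" unfolding part_of_def by simp

lemma inj_part_of: "inj part_of"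
proof (rule injI)
  fix a b assume h: "part_of a = part_of b"
  show "a = b"
  proof (cases "a = 0")
    case True
    then show ?thesis using h part_of_pos[of b] part_of_0 by (cases "b = 0") auto
  next
    case False
    then show ?thesis using h part_of_pos[of b] part_of_pos[of a] part_of_0 part_of_inj[of a b] by (cases "b = 0") auto
  qed
qed

lemma U15_eq_part_of: "U15 = {part_of j | j. j \<noteq> 0}"
  unfolding U15_def part_of_def by simp

lemma U15_subset_range: "U15 \<subseteq> range part_of" unfolding U15_eq_part_of by auto

text \<open>The sum ranges over at most one index; it makes \<open>part_weight\<close> vanish outside \<open>U15\<close>.\<close>

definition part_weight :: "nat \<Rightarrow> int" where
  "part_weight u = (\<Sum>j\<in>{j. j \<noteq> 0 \<and> part_of j = u}. (-1 - 3 * j))"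

lemma part_weight_part_of: "j \<noteq> 0 \<Longrightarrow> part_weight (part_of j) = -1 - 3 * j"
proof -
  assume j: "j \<noteq> 0"
  have "{i. i \<noteq> 0 \<and> part_of i = part_of j} = {j}" using part_of_inj j by auto
  then show ?thesis unfolding part_weight_def by simp
qed

lemma part_weight_notin_U15: "u \<notin> U15 \<Longrightarrow> part_weight u = 0"
proof -
  assume "u \<notin> U15"
  then have e: "{j. j \<noteq> 0 \<and> part_of j = u} = {}" unfolding U15_eq_part_of by auto
  show ?thesis unfolding part_weight_def e by simp
qed

definition used_indices :: "nat list \<Rightarrow> int set" where
  "used_indices c = {j. j \<noteq> 0 \<and> mult (part_of j) c > 0}"

definition comp_weight :: "nat list \<Rightarrow> int" where
  "comp_weight c = (\<Prod>j\<in>used_indices c. (-1 - 3 * j) ^ mult (part_of j) c)"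

lemma finite_used_indices: "finite (used_indices c)"
proof -
  have "used_indices c \<subseteq> {- int (sum_list c)..int (sum_list c)}"
  proof
    fix j assume "j \<in> used_indices c"
    then have j0: "j \<noteq> 0" and m: "mult (part_of j) c > 0" unfolding used_indices_def by auto
    then have "part_of j \<in> set c" unfolding mult_def by (metis count_list_0_iff less_irrefl)
    then have "part_of j \<le> sum_list c" by (rule member_le_sum_list) auto
    then show "j \<in> {- int (sum_list c)..int (sum_list c)}" using abs_le_part_of[OF j0] by auto
  qed
  then show ?thesis by (rule finite_subset) simp
qed

lemma comp_weight_superset:
  assumes "finite J" "used_indices c \<subseteq> J" "0 \<notin> J"
  shows "comp_weight c = (\<Prod>j\<in>J. (-1 - 3 * j) ^ mult (part_of j) c)"
  unfolding comp_weight_def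
  by (rule prod.mono_neutral_left) (use assms in \<open>auto simp: used_indices_def\<close>)

lemma comp_weight_Cons_part_of:
  assumes j0: "j0 \<noteq> 0"
  shows "comp_weight (part_of j0 # c) = (-1 - 3 * j0) * comp_weight c"
proof -
  define J where "J = insert j0 (used_indices c)"
  have J: "finite J" "0 \<notin> J" using finite_used_indices j0 by (auto simp: J_def used_indices_def)
  have mult_Cons: "mult (part_of j) (part_of j0 # c) = mult (part_of j) c + (if j = j0 then 1 else 0)"
    if "j \<in> J" for j
  proof -
    have "j \<noteq> 0" using that J by auto
    then show ?thesis using part_of_inj[of j j0] j0 unfolding mult_def by auto
  qed
  have "used_indices (part_of j0 # c) \<subseteq> J"
    using part_of_inj j0 by (auto simp: J_def used_indices_def mult_def)
  then have "comp_weight (part_of j0 # c) = (\<Prod>j\<in>J. (-1 - 3 * j) ^ mult (part_of j) (part_of j0 # c))"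
    using J by (intro comp_weight_superset)
  also have "\<dots> = (\<Prod>j\<in>J. (if j = j0 then -1 - 3 * j0 else 1) * (-1 - 3 * j) ^ mult (part_of j) c)"
    by (intro prod.cong refl) (simp add: mult_Cons power_add)
  also have "\<dots> = (-1 - 3 * j0) * comp_weight c"
  proof -
    have "comp_weight c = (\<Prod>j\<in>J. (-1 - 3 * j) ^ mult (part_of j) c)"
      using J by (intro comp_weight_superset) (auto simp: J_def)
    then show ?thesis using J by (simp add: prod.distrib J_def)
  qed
  finally show ?thesis .
qed

lemma comp_weight_Nil: "comp_weight [] = 1"
  unfolding comp_weight_def used_indices_def mult_def by simp

lemma comp_weight_Cons: "u \<in> U15 \<Longrightarrow> comp_weight (u # c) = part_weight u * comp_weight c"
proof -
  assume "u \<in> U15"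
  then obtain j where j: "j \<noteq> 0" "u = part_of j" unfolding U15_eq_part_of by auto
  then show ?thesis using comp_weight_Cons_part_of part_weight_part_of by simp
qed

definition comps :: "nat \<Rightarrow> nat list set" where
  "comps n = {c \<in> compositions U15. sum_list c = n}"

definition weighted_count :: "nat \<Rightarrow> int" where
  "weighted_count n = (\<Sum>c\<in>comps n. comp_weight c)"

lemma U15_pos: "u \<in> U15 \<Longrightarrow> u > 0"
  unfolding U15_eq_part_of using part_of_pos by auto

lemma finite_comps: "finite (comps n)"
proof -
  have "comps n \<subseteq> {xs. set xs \<subseteq> {1..n} \<and> length xs \<le> n}"
  proof
    fix c assume "c \<in> comps n"
    then have c: "\<forall>x\<in>set c. 0 < x" "sum_list c = n" unfolding comps_def compositions_def by auto
    have "set c \<subseteq> {1..n}"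
    proof
      fix x assume "x \<in> set c"
      then have "x \<le> sum_list c" by (rule member_le_sum_list) auto
      then show "x \<in> {1..n}" using c \<open>x \<in> set c\<close> by (auto simp: Suc_le_eq)
    qed
    moreover have "length c \<le> sum_list c" using c(1) by (induction c) (auto simp: Suc_le_eq)
    ultimately show "c \<in> {xs. set xs \<subseteq> {1..n} \<and> length xs \<le> n}" using c by simp
  qed
  then show ?thesis by (rule finite_subset) (rule finite_lists_length_le, simp)
qed

lemma weighted_count_0: "weighted_count 0 = 1"
proof -
  have "comps 0 = {[]}"
  proof (rule set_eqI, rule iffI)
    fix c assume "c \<in> comps 0"
    then have "\<forall>x\<in>set c. 0 < x" "sum_list c = 0" unfolding comps_def compositions_def by auto
    then show "c \<in> {[]}" by (cases c) auto
  qed (auto simp: comps_def compositions_def)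
  then show ?thesis unfolding weighted_count_def by (simp add: comp_weight_Nil)
qed

lemma weighted_count_rec:
  "n > 0 \<Longrightarrow> weighted_count n = (\<Sum>u\<in>{1..n}. part_weight u * weighted_count (n - u))"
proof -
  assume n: "n > 0"
  define A where "A = {u \<in> {1..n}. u \<in> U15}"
  have "(\<Sum>(u, c)\<in>Sigma A (\<lambda>u. comps (n - u)). comp_weight (u # c)) = (\<Sum>c\<in>comps n. comp_weight c)"
  proof (rule sum.reindex_bij_witness[where j="\<lambda>(u, c). u # c" and i="\<lambda>c. (hd c, tl c)"])
    fix x assume x: "x \<in> Sigma A (\<lambda>u. comps (n - u))"
    then obtain u c where uc: "x = (u, c)" "u \<in> A" "c \<in> comps (n - u)" by auto
    then show "(case x of (u, c) \<Rightarrow> u # c) \<in> comps n" "(hd (case x of (u, c) \<Rightarrow> u # c), tl (case x of (u, c) \<Rightarrow> u # c)) = x"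
      "comp_weight (case x of (u, c) \<Rightarrow> u # c) = (case x of (u, c) \<Rightarrow> comp_weight (u # c))"
      unfolding A_def comps_def compositions_def using U15_pos by auto
  next
    fix c assume c: "c \<in> comps n"
    then have "c \<noteq> []" using n unfolding comps_def by auto
    then show "(case (hd c, tl c) of (u, c) \<Rightarrow> u # c) = c" by simp
    show "(hd c, tl c) \<in> Sigma A (\<lambda>u. comps (n - u))"
    proof -
      obtain u c' where cc: "c = u # c'" using \<open>c \<noteq> []\<close> by (cases c) auto
      then have "u \<in> U15" "u > 0" "sum_list c = n" "\<forall>x\<in>set c'. 0 < x \<and> x \<in> U15"
        using c unfolding comps_def compositions_def by auto
      then show ?thesis unfolding cc A_def comps_def compositions_def by auto
    qed
  qed
  then have "weighted_count n = (\<Sum>(u, c)\<in>Sigma A (\<lambda>u. comps (n - u)). comp_weight (u # c))"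
    unfolding weighted_count_def by simp
  also have "\<dots> = (\<Sum>u\<in>A. \<Sum>c\<in>comps (n - u). comp_weight (u # c))"
    by (rule sum.Sigma[symmetric]) (auto simp: A_def finite_comps)
  also have "\<dots> = (\<Sum>u\<in>A. part_weight u * weighted_count (n - u))"
    unfolding weighted_count_def sum_distrib_left by (intro sum.cong refl) (auto simp: A_def comp_weight_Cons)
  also have "\<dots> = (\<Sum>u\<in>{1..n}. part_weight u * weighted_count (n - u))"
    unfolding A_def by (rule sum.mono_neutral_left) (auto simp: part_weight_notin_U15)
  finally show ?thesis .
qed

section \<open>Coefficients of reciprocal power series\<close>

lemma powser_zero_coeffs:
  fixes d :: "nat \<Rightarrow> real"
  assumes r: "r > 0" and h: "\<And>q. q \<noteq> 0 \<Longrightarrow> \<bar>q\<bar> < r \<Longrightarrow> (\<lambda>n. d n * q ^ n) sums 0"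
  shows "d k = 0"
proof (induction k rule: less_induct)
  case (less k)
  have shifted: "(\<lambda>j. d (j + k) * q ^ j) sums 0" if q: "q \<noteq> 0" "\<bar>q\<bar> < r" for q
  proof -
    have "(\<lambda>j. d (j + k) * q ^ (j + k)) sums (0 - (\<Sum>i<k. d i * q ^ i))"
      using sums_split_initial_segment[OF h[OF q]] .
    then have "(\<lambda>j. d (j + k) * q ^ (j + k) / q ^ k) sums 0"
      using less.IH sums_divide by fastforce
    then show ?thesis using q by (simp add: power_add)
  qed
  have "((\<lambda>_. 0) \<longlongrightarrow> d (0 + k)) (at (0 :: real))"
    by (rule powser_limit_0_strong[where a = "\<lambda>j. d (j + k)" and s = r]) (use r shifted in auto)
  then show ?case by (metis LIM_const_eq add_0)
qed

lemma powser_reciprocal_coeffs: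
  fixes a b :: "nat \<Rightarrow> real"
  assumes r: "r > 0"
    and a: "\<And>q. q \<noteq> 0 \<Longrightarrow> \<bar>q\<bar> < r \<Longrightarrow> (\<lambda>n. a n * q ^ n) sums A q"
    and b: "\<And>q. q \<noteq> 0 \<Longrightarrow> \<bar>q\<bar> < r \<Longrightarrow> (\<lambda>n. b n * q ^ n) sums B q"
    and AB: "\<And>q. q \<noteq> 0 \<Longrightarrow> \<bar>q\<bar> < r \<Longrightarrow> A q * B q = 1"
  shows "(\<Sum>i\<le>k. a i * b (k - i)) = (if k = 0 then 1 else 0)"
proof -
  define c where "c k = (\<Sum>i\<le>k. a i * b (k - i))" for k
  have c_sums: "(\<lambda>k. c k * q ^ k) sums 1" if q: "q \<noteq> 0" "\<bar>q\<bar> < r" for q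
  proof -
    define q' where "q' = (\<bar>q\<bar> + r) / 2"
    have q': "q' \<noteq> 0" "\<bar>q'\<bar> < r" "norm q < norm q'" using q by (auto simp: q'_def)
    have "summable (\<lambda>n. norm (a n * q ^ n))" "summable (\<lambda>n. norm (b n * q ^ n))"
      using powser_insidea[OF sums_summable[OF a[OF q'(1,2)]] q'(3)]
            powser_insidea[OF sums_summable[OF b[OF q'(1,2)]] q'(3)] by simp_all
    then have "(\<lambda>k. \<Sum>i\<le>k. (a i * q ^ i) * (b (k - i) * q ^ (k - i))) sums
        ((\<Sum>n. a n * q ^ n) * (\<Sum>n. b n * q ^ n))"
      by (rule Cauchy_product_sums)
    moreover have "(\<Sum>n. a n * q ^ n) * (\<Sum>n. b n * q ^ n) = 1"
      using sums_unique[OF a[OF q]] sums_unique[OF b[OF q]] AB[OF q] by simp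
    moreover have "(\<Sum>i\<le>k. (a i * q ^ i) * (b (k - i) * q ^ (k - i))) = c k * q ^ k" for k
      unfolding c_def sum_distrib_right by (intro sum.cong refl) (simp add: mult_ac flip: power_add)
    ultimately show ?thesis by simp
  qed
  have "c k - (if k = 0 then 1 else 0) = 0"
  proof (rule powser_zero_coeffs[OF r, where d = "\<lambda>k. c k - (if k = 0 then 1 else 0)"])
    fix q :: real assume q: "q \<noteq> 0" "\<bar>q\<bar> < r"
    have "(\<lambda>k. (if k = 0 then 1 else 0) * q ^ k) sums 1"
      using sums_finite[of "{0}" "\<lambda>k. (if k = 0 then 1 else 0) * q ^ k"] by simp
    from sums_diff[OF c_sums[OF q] this]
    show "(\<lambda>k. (c k - (if k = 0 then 1 else 0)) * q ^ k) sums 0"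
      by (simp add: left_diff_distrib)
  qed
  then show ?thesis by (simp add: c_def)
qed

section \<open>The generating function of \<open>s\<close>\<close>

definition F_prod :: "real \<Rightarrow> real" where
  "F_prod q = qpoch_inf q (q ^ 2) ^ 2 * qpoch_inf (q ^ 2) (q ^ 2) * qpoch_inf (q ^ 4) (q ^ 4) ^ 2"

lemma F_prod_nonzero: "\<bar>q\<bar> < 1 \<Longrightarrow> F_prod q \<noteq> 0"
proof -
  assume q: "\<bar>q\<bar> < 1"
  then have "\<bar>q ^ 2\<bar> < 1" "\<bar>q ^ 4\<bar> < 1"
    using power_less_one_iff[of "\<bar>q\<bar>" 2] power_less_one_iff[of "\<bar>q\<bar>" 4] by (simp_all add: power_abs)
  then show ?thesis unfolding F_prod_def using q by (simp add: qpoch_inf_nonzero)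
qed

lemma generating_function_eq:
  fixes q :: real
  assumes q: "\<bar>q\<bar> < 1"
  shows "qpoch_inf (q ^ 2) (q ^ 2) / (qpoch_inf q q ^ 2 * qpoch_inf (q ^ 4) (q ^ 4) ^ 2) = 1 / F_prod q"
proof -
  have "qpoch_inf q q = qpoch_inf q (q ^ 2) * qpoch_inf (q ^ 2) (q ^ 2)"
    using qpoch_inf_split[OF q, of 2] by (simp add: numeral_2_eq_2)
  moreover have "\<bar>q ^ 2\<bar> < 1" using power_less_one_iff[of "\<bar>q\<bar>" 2] q by (simp add: power_abs)
  ultimately show ?thesis
    using qpoch_inf_nonzero[of "q ^ 2" "q ^ 2"]
      by (simp add: F_prod_def field_simps power2_eq_square)
qed

definition F_coeff :: "nat \<Rightarrow> real" where
  "F_coeff n = (if n = 0 then 1 else - of_int (part_weight n))"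

lemma F_coeff_sums:
  fixes q :: real
  assumes q0: "q \<noteq> 0" and q1: "\<bar>q\<bar> < 1"
  shows "(\<lambda>n. F_coeff n * q ^ n) sums F_prod q"
proof -
  define FS where "FS = F_prod q"
  define h where "h n = F_coeff n * q ^ n" for n
  have e: "linear_theta_term q m = h (part_of m)" for m
  proof (cases "m = 0")
    case True then show ?thesis by (simp add: linear_theta_term_def h_def F_coeff_def part_of_0)
  next
    case False
    have p: "m * (3 * m + 2) \<ge> 0" using part_int_ge_abs[OF False] abs_ge_zero[of m] by linarith
    have g: "3 * m * m + 2 * m = int (part_of m)"
      using p unfolding part_of_def by (simp add: algebra_simps)
    have "part_of m \<noteq> 0" using part_of_pos[OF False] by simp
    then show ?thesis unfolding linear_theta_term_def h_def F_coeff_def g power_int_of_nat using part_weight_part_of[OF False] by simp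
  qed
  have "(linear_theta_term q has_sum FS) UNIV"
    unfolding FS_def F_prod_def by (rule linear_theta_has_sum[OF q0 q1])
  moreover have fe: "linear_theta_term q = h \<circ> part_of" by (rule ext) (simp add: e)
  ultimately have "((h \<circ> part_of) has_sum FS) UNIV" by simp
  then have "(h has_sum FS) (range part_of)" by (subst has_sum_reindex) (use inj_part_of in auto)
  moreover have "h n = 0" if "n \<in> UNIV - range part_of" for n
  proof -
    have "n \<noteq> 0" using that part_of_0 by (metis DiffD2 rangeI)
    moreover have "n \<notin> U15" using that U15_subset_range by auto
    ultimately show ?thesis unfolding h_def F_coeff_def by (simp add: part_weight_notin_U15)
  qed
  ultimately have "(h has_sum FS) UNIV"
    using has_sum_cong_neutral[of UNIV "range part_of" h h FS] by auto
  then show ?thesis unfolding h_def FS_def by (rule has_sum_imp_sums)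
qed

lemma coeffs_eq_weighted_count:
  assumes "\<And>k. (\<Sum>i\<le>k. F_coeff i * t (k - i)) = (if k = 0 then 1 else 0)"
  shows "t k = of_int (weighted_count k)"
proof (induction k rule: less_induct)
  case (less k)
  show ?case
  proof (cases "k = 0")
    case True
    then show ?thesis using assms[of 0] by (simp add: F_coeff_def weighted_count_0)
  next
    case False
    have "{..k} = insert 0 {1..k}" by auto
    then have "0 = t k + (\<Sum>i\<in>{1..k}. - of_int (part_weight i) * t (k - i))"
      using assms[of k] False by (simp add: F_coeff_def)
    then have "t k = (\<Sum>i\<in>{1..k}. of_int (part_weight i) * t (k - i))"
      by (simp add: sum_negf)
    also have "\<dots> = (\<Sum>i\<in>{1..k}. of_int (part_weight i) * of_int (weighted_count (k - i)))"
      by (intro sum.cong refl) (use less.IH in auto)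
    also have "\<dots> = of_int (weighted_count k)" using weighted_count_rec[of k] False by simp
    finally show ?thesis .
  qed
qed

theorem mainTheorem15:
  fixes s :: "nat \<Rightarrow> real"
  assumes gf: "\<And>q::real. \<bar>q\<bar> < 1 \<Longrightarrow>
     (\<lambda>n. s n * q ^ n) sums
       (qpoch_inf (q^2) (q^2) / ((qpoch_inf q q)^2 * (qpoch_inf (q^4) (q^4))^2))"
  shows "s n = of_int (\<Sum>c \<in> {c \<in> compositions U15. sum_list c = n}.
            \<Prod>j \<in> {j::int. j \<noteq> 0 \<and> mult (nat (j * (3 * j + 2))) c > 0}.
               (-1 - 3 * j) ^ mult (nat (j * (3 * j + 2))) c)"
proof -
  have "(\<Sum>i\<le>k. F_coeff i * s (k - i)) = (if k = 0 then 1 else 0)" for k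
    by (rule powser_reciprocal_coeffs[where r = 1 and A = F_prod and B = "\<lambda>q. 1 / F_prod q"])
       (use F_coeff_sums F_prod_nonzero gf generating_function_eq in auto)
  then have "s n = of_int (weighted_count n)"
    by (rule coeffs_eq_weighted_count)
  then show ?thesis
    unfolding weighted_count_def comps_def comp_weight_def used_indices_def part_of_def .
qed

end
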